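(* Let $p\in(0,1/2)$ be a fixed constant, and let $k=k(n)$ and $\delta=\delta(n)$ satisfy $k=o(n)$, $\delta=o(1)$, and $\delta\ge n^{-1+\epsilon}$ for some positive constant $\epsilon$. Then, for fixed-length algorithms, it is both necessary and sufficient to use $(1\pm o(1))\frac{n\log\frac{k}{\delta}}{D_{\mathsf{KL}}(p\|1-p)}$ queries to compute the $\mathsf{TH}_k$ function with worst-case error probability $\delta$.
   Context: For $\mathbf{x}\in\{0,1\}^n$, $\mathsf{TH}_k(\mathbf{x})=1$ if $\sum_i x_i\ge k$ and $0$ otherwise. Noisy query model: at each time step the algorithm chooses an index $i\in[n]$ (possibly adaptively, depending on previous responses) and observes $x_i\oplus Z$ with $Z\sim\mathsf{Bern}(p)$ independent of everything else; $p$ is known. A fixed-length algorithm is one whose number of queries is at most a deterministic number (not depending on the randomness of the responses); it outputs an estimate $\widehat{\mathsf{TH}}_k$, and its worst-case error probability is $\max_{\mathbf{x}}\mathbb{P}(\widehat{\mathsf{TH}}_k\neq\mathsf{TH}_k(\mathbf{x})\mid\mathbf{x})$. $D_{\mathsf{KL}}(p\|1-p)=(1-2p)\log\frac{1-p}{p}$, natural logarithm; $o(1)$ is as $n\to\infty$. *)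

theory Defs
  imports "HOL-Probability.Probability" "HOL-Library.Landau_Symbols"
begin

text \<open>Inputs x in {0,1}^n are modelled as functions nat => bool that vanish outside {0..<n}
  (index i of the paper corresponds to i-1 here).\<close>

definition inputs :: "nat \<Rightarrow> (nat \<Rightarrow> bool) set" where
  "inputs n = {x. \<forall>i\<ge>n. \<not> x i}"

definition TH :: "nat \<Rightarrow> nat \<Rightarrow> (nat \<Rightarrow> bool) \<Rightarrow> bool" where
  "TH n k x = (k \<le> card {i. i < n \<and> x i})"

definition D_KL :: "real \<Rightarrow> real" where
  "D_KL p = (1 - 2 * p) * ln ((1 - p) / p)"

text \<open>A deterministic adaptive strategy: q maps the list of responses seen so far to the next
  queried index, out maps the final list of responses to the output.  A (randomized)
  fixed-length algorithm is a probability distribution over such strategies, run for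
  exactly T queries.\<close>

type_synonym strategy = "(bool list \<Rightarrow> nat) \<times> (bool list \<Rightarrow> bool)"

fun responses :: "real \<Rightarrow> (bool list \<Rightarrow> nat) \<Rightarrow> (nat \<Rightarrow> bool) \<Rightarrow> nat \<Rightarrow> bool list pmf" where
  "responses p q x 0 = return_pmf []"
| "responses p q x (Suc t) =
     bind_pmf (responses p q x t)
       (\<lambda>hs. map_pmf (\<lambda>z. hs @ [x (q hs) \<noteq> z]) (bernoulli_pmf p))"

definition valid_alg :: "nat \<Rightarrow> strategy pmf \<Rightarrow> bool" where
  "valid_alg n A = (\<forall>s\<in>set_pmf A. \<forall>hs. fst s hs < n)"

definition output_dist :: "real \<Rightarrow> strategy pmf \<Rightarrow> nat \<Rightarrow> (nat \<Rightarrow> bool) \<Rightarrow> bool pmf" where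
  "output_dist p A T x = bind_pmf A (\<lambda>s. map_pmf (snd s) (responses p (fst s) x T))"

definition err_prob :: "real \<Rightarrow> nat \<Rightarrow> nat \<Rightarrow> strategy pmf \<Rightarrow> nat \<Rightarrow> (nat \<Rightarrow> bool) \<Rightarrow> real" where
  "err_prob p n k A T x = measure_pmf.prob (output_dist p A T x) {b. b \<noteq> TH n k x}"

definition worst_err :: "real \<Rightarrow> nat \<Rightarrow> nat \<Rightarrow> strategy pmf \<Rightarrow> nat \<Rightarrow> real" where
  "worst_err p n k A T = (SUP x\<in>inputs n. err_prob p n k A T x)"

end

theory Submission
  imports Defs
begin

(*
  Upper bound: test the indices one after another, querying index i until the number of True
  minus the number of False answers reaches b (declare a one) or -a (declare a zero), and stop
  as soon as k ones have been found.  With c = ln ((1-p)/p), gambler's ruin bounds the probability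
  of misclassifying a zero by exp (-c b) and a one by exp (-c a), while each walk drifts towards
  its correct barrier by 1 - 2p per query, so about (a n + b k) / (1 - 2p) queries suffice.
  The choices a ~ ln (k/delta) / c and b ~ ln (n/delta) / c give (1 + o(1)) n ln (k/delta) / D_KL.

  Lower bound: averaging over k-sets S shows that most i in S are queried only about m ~ T/n
  times on the input S - {i}, which rejects.  For those i the likelihood ratio of S - {i} against
  S, truncated where its logarithm exceeds c (1-2p) alpha^2 m, still carries almost all the mass
  of S - {i} but has second moment at most exp (D_KL alpha^2 m).  Combining these ratios by
  u v <= K u + v^2 / (4 K) against the error on S forces exp (D_KL alpha^2 m) >~ k / delta.
*)

section \<open>The response distribution as a finite sum\<close>

definition hist_prob :: "real \<Rightarrow> (nat \<Rightarrow> bool) \<Rightarrow> (bool list \<Rightarrow> nat) \<Rightarrow> bool list \<Rightarrow> real" where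
  "hist_prob p x q hs = (\<Prod>j<length hs. if hs!j = x (q (take j hs)) then 1-p else p)"

lemma hist_prob_Nil [simp]: "hist_prob p x q [] = 1"
  by (simp add: hist_prob_def)

lemma hist_prob_snoc:
  "hist_prob p x q (hs@[h]) = hist_prob p x q hs * (if h = x (q hs) then 1-p else p)"
proof -
  have "(\<Prod>j<length hs. if (hs@[h])!j = x (q (take j (hs@[h]))) then 1-p else p) = hist_prob p x q hs"
    unfolding hist_prob_def by (intro prod.cong) (auto simp: nth_append)
  then show ?thesis
    by (simp add: hist_prob_def prod.lessThan_Suc)
qed

lemma hist_prob_nonneg: "0 \<le> p \<Longrightarrow> p \<le> 1 \<Longrightarrow> 0 \<le> hist_prob p x q hs"
  unfolding hist_prob_def by (intro prod_nonneg) auto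

definition histories :: "nat \<Rightarrow> bool list set" where
  "histories t = {hs. length hs = t}"

lemma finite_histories [simp]: "finite (histories t)"
  using finite_lists_length_eq[of "UNIV :: bool set" t] by (simp add: histories_def)

lemma sum_histories_Suc:
  "(\<Sum>hs\<in>histories (Suc t). g hs) = (\<Sum>hs\<in>histories t. g (hs@[True]) + g (hs@[False]))"
proof -
  have image: "histories (Suc t) = (\<lambda>(hs,h). hs@[h]) ` (histories t \<times> UNIV)"
    by (auto simp: histories_def image_iff length_Suc_conv_rev)
  have "inj_on (\<lambda>(hs::bool list, h::bool). hs@[h]) (histories t \<times> UNIV)"
    by (auto simp: inj_on_def)
  then have "(\<Sum>hs\<in>histories (Suc t). g hs) = (\<Sum>hs\<in>histories t. \<Sum>h\<in>UNIV. g (hs@[h]))"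
    unfolding image by (simp add: sum.reindex case_prod_unfold sum.cartesian_product)
  then show ?thesis
    by (simp add: UNIV_bool add.commute)
qed

lemma pmf_responses:
  assumes "0 \<le> p" "p \<le> 1"
  shows "pmf (responses p q x t) hs = (if length hs = t then hist_prob p x q hs else 0)"
proof (induction t arbitrary: hs)
  case 0
  then show ?case by (auto simp: indicator_def)
next
  case (Suc t)
  define step where "step hs' = map_pmf (\<lambda>z. hs' @ [x (q hs') \<noteq> z]) (bernoulli_pmf p)" for hs'
  have support: "set_pmf (responses p q x t) \<subseteq> histories t"
    using Suc.IH by (auto simp: set_pmf_eq histories_def split: if_splits)
  have outside: "pmf (step hs') hs = 0" if "hs' \<noteq> butlast hs \<or> length hs \<noteq> Suc (length hs')" for hs'
    unfolding step_def by (rule pmf_map_outside) (use that in auto)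
  have "pmf (responses p q x (Suc t)) hs = (\<Sum>hs'\<in>histories t. pmf (step hs') hs * pmf (responses p q x t) hs')"
    unfolding step_def[abs_def] by (simp add: pmf_bind integral_measure_pmf_real[OF _ subsetD[OF support]])
  also have "\<dots> = (if length hs = Suc t then hist_prob p x q hs else 0)"
  proof (cases "length hs = Suc t")
    case True
    then obtain hs' h where hs: "hs = hs' @ [h]" and len: "length hs' = t"
      by (metis length_Suc_conv_rev)
    have "{z. (x (q hs') \<noteq> z) = h} = {x (q hs') \<noteq> h}"
      by auto
    then have "pmf (step hs') hs = measure_pmf.prob (bernoulli_pmf p) {x (q hs') \<noteq> h}"
      unfolding step_def by (simp add: pmf_map hs vimage_def)
    also have "\<dots> = (if h = x (q hs') then 1-p else p)"
      using assms by (simp add: measure_pmf_single)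
    finally have "pmf (step hs') hs = (if h = x (q hs') then 1-p else p)" .
    moreover have "(\<Sum>hs''\<in>histories t. pmf (step hs'') hs * pmf (responses p q x t) hs'')
        = pmf (step hs') hs * pmf (responses p q x t) hs'"
      by (subst sum.remove[of _ hs']) (use len hs outside finite_histories[of t] in \<open>auto simp: histories_def\<close>)
    ultimately show ?thesis
      using True hs len Suc.IH[of hs'] by (simp add: hist_prob_snoc mult.commute)
  next
    case False
    then have "pmf (step hs') hs = 0" if "hs' \<in> histories t" for hs'
      using that False by (intro outside) (simp add: histories_def)
    then show ?thesis using False by simp
  qed
  finally show ?case .
qed

definition hist_expect ::
  "real \<Rightarrow> (bool list \<Rightarrow> nat) \<Rightarrow> (nat \<Rightarrow> bool) \<Rightarrow> nat \<Rightarrow> (bool list \<Rightarrow> real) \<Rightarrow> real" where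
  "hist_expect p q x t f = (\<Sum>hs\<in>histories t. hist_prob p x q hs * f hs)"

lemma integral_responses:
  assumes "0 \<le> p" "p \<le> 1"
  shows "(\<integral>hs. f hs \<partial>measure_pmf (responses p q x t)) = hist_expect p q x t f"
  unfolding hist_expect_def
  by (subst integral_measure_pmf_real[of "histories t"])
     (use finite_histories[of t] in \<open>auto simp: pmf_responses[OF assms] histories_def set_pmf_eq mult.commute split: if_splits
           intro!: sum.cong\<close>)

lemma prob_responses:
  assumes "0 \<le> p" "p \<le> 1"
  shows "measure_pmf.prob (responses p q x t) S = hist_expect p q x t (indicator S)"
  using integral_responses[OF assms, where f="indicator S"] by simp

lemma hist_expect_0 [simp]: "hist_expect p q x 0 f = f []"
  by (simp add: hist_expect_def histories_def)

lemma hist_expect_Suc: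
  "hist_expect p q x (Suc t) f =
     hist_expect p q x t (\<lambda>hs. p * f (hs@[\<not> x (q hs)]) + (1-p) * f (hs@[x (q hs)]))"
  unfolding hist_expect_def sum_histories_Suc
  by (intro sum.cong) (auto simp: hist_prob_snoc algebra_simps)

lemma hist_expect_cong:
  "(\<And>hs. length hs = t \<Longrightarrow> f hs = g hs) \<Longrightarrow> hist_expect p q x t f = hist_expect p q x t g"
  unfolding hist_expect_def by (intro sum.cong) (auto simp: histories_def)

lemma hist_expect_mono:
  "0 \<le> p \<Longrightarrow> p \<le> 1 \<Longrightarrow> (\<And>hs. length hs = t \<Longrightarrow> f hs \<le> g hs) \<Longrightarrow>
   hist_expect p q x t f \<le> hist_expect p q x t g"
  unfolding hist_expect_def
  by (intro sum_mono mult_left_mono) (auto simp: hist_prob_nonneg histories_def)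

lemma hist_expect_add:
  "hist_expect p q x t (\<lambda>hs. f hs + g hs) = hist_expect p q x t f + hist_expect p q x t g"
  unfolding hist_expect_def by (simp add: sum.distrib algebra_simps)

lemma hist_expect_cmult: "hist_expect p q x t (\<lambda>hs. c * f hs) = c * hist_expect p q x t f"
  unfolding hist_expect_def by (simp add: sum_distrib_left algebra_simps)

lemma hist_expect_const [simp]: "hist_expect p q x t (\<lambda>hs. c) = c"
  by (induction t) (simp_all add: hist_expect_Suc algebra_simps)

lemma hist_expect_abs_le:
  assumes "0 \<le> p" "p \<le> 1" "\<And>hs. length hs = t \<Longrightarrow> \<bar>f hs\<bar> \<le> B"
  shows "\<bar>hist_expect p q x t f\<bar> \<le> B"
proof -
  have bounds: "f hs \<le> B" "-B \<le> f hs" if "length hs = t" for hs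
    using assms(3)[OF that] by linarith+
  have "hist_expect p q x t f \<le> hist_expect p q x t (\<lambda>_. B)"
    by (rule hist_expect_mono) (use assms(1,2) bounds in auto)
  moreover have "hist_expect p q x t (\<lambda>_. -B) \<le> hist_expect p q x t f"
    by (rule hist_expect_mono) (use assms(1,2) bounds in auto)
  ultimately show ?thesis by simp
qed

lemma hist_expect_supermartingale:
  assumes "0 \<le> p" "p \<le> 1" "0 \<le> \<beta>"
    and "\<And>hs. p * V (hs@[\<not> x (q hs)]) + (1-p) * V (hs@[x (q hs)]) \<le> \<beta> * V hs"
  shows "hist_expect p q x t V \<le> \<beta>^t * V []"
proof (induction t)
  case (Suc t)
  have "hist_expect p q x (Suc t) V \<le> hist_expect p q x t (\<lambda>hs. \<beta> * V hs)"
    unfolding hist_expect_Suc by (rule hist_expect_mono) (use assms in auto)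
  also have "\<dots> \<le> \<beta> * (\<beta>^t * V [])"
    unfolding hist_expect_cmult using Suc assms by (intro mult_left_mono) auto
  finally show ?case by simp
qed simp

section \<open>The sequential threshold algorithm\<close>

text \<open>Index \<open>i\<close> is queried repeatedly; the
  responses drive a walk \<open>w\<close> (\<open>+1\<close> on \<open>True\<close>, \<open>-1\<close> on \<open>False\<close>) started at \<open>0\<close>, and \<open>i\<close> is declared
  a one when \<open>w\<close> reaches \<open>b\<close> and a zero when it reaches \<open>-a\<close>.  A state \<open>(i, w, d)\<close> also counts the
  \<open>d\<close> ones declared so far; the algorithm halts once \<open>i = n\<close> or \<open>d = k\<close> and outputs \<open>k \<le> d\<close>.
  Since algorithms have a fixed length, the queries after halting go to index \<open>0\<close> and are ignored.\<close>

type_synonym walk_state = "nat \<times> int \<times> nat"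

definition walk_incr :: "bool \<Rightarrow> int" where
  "walk_incr h = (if h then 1 else -1)"

definition walk_next :: "nat \<Rightarrow> nat \<Rightarrow> nat \<Rightarrow> nat \<Rightarrow> walk_state \<Rightarrow> bool \<Rightarrow> walk_state" where
  "walk_next n k a b s h = (case s of (i,w,d) \<Rightarrow>
     if n \<le> i \<or> k \<le> d then (i,w,d)
     else if int b \<le> w + walk_incr h then (Suc i, 0, Suc d)
     else if w + walk_incr h \<le> - int a then (Suc i, 0, d)
     else (i, w + walk_incr h, d))"

definition walk_run :: "nat \<Rightarrow> nat \<Rightarrow> nat \<Rightarrow> nat \<Rightarrow> bool list \<Rightarrow> walk_state" where
  "walk_run n k a b hs = foldl (walk_next n k a b) (0,0,0) hs"

definition walk_query :: "nat \<Rightarrow> nat \<Rightarrow> nat \<Rightarrow> nat \<Rightarrow> bool list \<Rightarrow> nat" where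
  "walk_query n k a b hs = (case walk_run n k a b hs of (i,w,d) \<Rightarrow> if i < n then i else 0)"

definition walk_output :: "nat \<Rightarrow> nat \<Rightarrow> nat \<Rightarrow> nat \<Rightarrow> bool list \<Rightarrow> bool" where
  "walk_output n k a b hs = (case walk_run n k a b hs of (i,w,d) \<Rightarrow> k \<le> d)"

lemma walk_query_less: "1 \<le> n \<Longrightarrow> walk_query n k a b hs < n"
  by (auto simp: walk_query_def split: prod.splits)

definition misclassifies :: "nat \<Rightarrow> nat \<Rightarrow> nat \<Rightarrow> nat \<Rightarrow> (nat \<Rightarrow> bool) \<Rightarrow> walk_state \<Rightarrow> bool \<Rightarrow> bool" where
  "misclassifies n k a b x s h = (case s of (i,w,d) \<Rightarrow> \<not> (n \<le> i \<or> k \<le> d) \<and>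
     ((int b \<le> w + walk_incr h \<and> \<not> x i) \<or> (w + walk_incr h < int b \<and> w + walk_incr h \<le> - int a \<and> x i)))"

definition tracked_next ::
  "nat \<Rightarrow> nat \<Rightarrow> nat \<Rightarrow> nat \<Rightarrow> (nat \<Rightarrow> bool) \<Rightarrow> walk_state \<times> bool \<Rightarrow> bool \<Rightarrow> walk_state \<times> bool" where
  "tracked_next n k a b x g h = (walk_next n k a b (fst g) h, snd g \<or> misclassifies n k a b x (fst g) h)"

definition tracked_run :: "nat \<Rightarrow> nat \<Rightarrow> nat \<Rightarrow> nat \<Rightarrow> (nat \<Rightarrow> bool) \<Rightarrow> bool list \<Rightarrow> walk_state \<times> bool" where
  "tracked_run n k a b x hs = foldl (tracked_next n k a b x) ((0,0,0),False) hs"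

lemma tracked_run_snoc:
  "tracked_run n k a b x (hs@[h]) = tracked_next n k a b x (tracked_run n k a b x hs) h"
  by (simp add: tracked_run_def)

lemma fst_tracked_run: "fst (tracked_run n k a b x hs) = walk_run n k a b hs"
  by (induction hs rule: rev_induct) (auto simp: tracked_run_def walk_run_def tracked_next_def)

lemma walk_query_tracked_run:
  "\<not> (n \<le> fst (fst (tracked_run n k a b x hs)) \<or> k \<le> snd (snd (fst (tracked_run n k a b x hs)))) \<Longrightarrow>
   walk_query n k a b hs = fst (fst (tracked_run n k a b x hs))"
  by (auto simp: walk_query_def fst_tracked_run split: prod.splits)

lemma tracked_next_active:
  assumes "\<not> (n \<le> i \<or> k \<le> d)"
  shows "tracked_next n k a b x ((i,w,d),bad) h =
    (if int b \<le> w + walk_incr h then ((Suc i, 0, Suc d), bad \<or> \<not> x i)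
     else if w + walk_incr h \<le> - int a then ((Suc i, 0, d), bad \<or> x i)
     else ((i, w + walk_incr h, d), bad))"
  using assms by (simp add: tracked_next_def walk_next_def misclassifies_def)

lemma tracked_next_halted:
  assumes "n \<le> i \<or> k \<le> d"
  shows "tracked_next n k a b x ((i,w,d),bad) h = ((i,w,d),bad)"
  using assms by (auto simp: tracked_next_def walk_next_def misclassifies_def)

definition walk_invariant :: "nat \<Rightarrow> nat \<Rightarrow> nat \<Rightarrow> nat \<Rightarrow> (nat \<Rightarrow> bool) \<Rightarrow> walk_state \<times> bool \<Rightarrow> bool" where
  "walk_invariant n k a b x g = (case g of ((i,w,d),bad) \<Rightarrow>
     i \<le> n \<and> - int a < w \<and> w < int b \<and> (\<not> bad \<longrightarrow> d = card {j. j < i \<and> x j}))"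

lemma card_less_Suc_filter:
  "card {j. j < Suc i \<and> x j} = card {j. j < i \<and> x j} + (if x i then 1 else 0)"
proof -
  have "{j. j < Suc i \<and> x j} = (if x i then insert i {j. j < i \<and> x j} else {j. j < i \<and> x j})"
    by (auto simp: less_Suc_eq)
  then show ?thesis by auto
qed

lemma walk_invariant_run:
  assumes "1 \<le> a" "1 \<le> b"
  shows "walk_invariant n k a b x (tracked_run n k a b x hs)"
proof (induction hs rule: rev_induct)
  case Nil
  then show ?case using assms by (simp add: tracked_run_def walk_invariant_def)
next
  case (snoc h hs)
  then show ?case using assms unfolding tracked_run_snoc
    by (cases "tracked_run n k a b x hs")
       (auto simp: walk_invariant_def tracked_next_def walk_next_def misclassifies_def walk_incr_def
          card_less_Suc_filter split: if_splits)
qed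

lemma walk_output_correct:
  assumes "walk_invariant n k a b x ((i,w,d),False)" "n \<le> i \<or> k \<le> d"
  shows "(k \<le> d) = TH n k x"
proof -
  have d: "d = card {j. j < i \<and> x j}" "i \<le> n"
    using assms by (auto simp: walk_invariant_def)
  have "card {j. j < i \<and> x j} \<le> card {j. j < n \<and> x j}"
    by (rule card_mono) (use d in auto)
  then show ?thesis using assms d unfolding TH_def by auto
qed

definition zeros_from :: "nat \<Rightarrow> (nat \<Rightarrow> bool) \<Rightarrow> nat \<Rightarrow> nat" where
  "zeros_from n x i = card {j. i \<le> j \<and> j < n \<and> \<not> x j}"

definition ones_from :: "nat \<Rightarrow> (nat \<Rightarrow> bool) \<Rightarrow> nat \<Rightarrow> nat" where
  "ones_from n x i = card {j. i \<le> j \<and> j < n \<and> x j}"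

lemma zeros_from_step: "i < n \<Longrightarrow> zeros_from n x i = (if x i then 0 else 1) + zeros_from n x (Suc i)"
proof -
  assume "i < n"
  then have "{j. i \<le> j \<and> j < n \<and> \<not> x j} =
      (if x i then {j. Suc i \<le> j \<and> j < n \<and> \<not> x j} else insert i {j. Suc i \<le> j \<and> j < n \<and> \<not> x j})"
    by (auto simp: Suc_le_eq le_less)
  then show ?thesis by (simp add: zeros_from_def)
qed

lemma ones_from_step: "i < n \<Longrightarrow> ones_from n x i = (if x i then 1 else 0) + ones_from n x (Suc i)"
proof -
  assume "i < n"
  then have "{j. i \<le> j \<and> j < n \<and> x j} =
      (if x i then insert i {j. Suc i \<le> j \<and> j < n \<and> x j} else {j. Suc i \<le> j \<and> j < n \<and> x j})"
    by (auto simp: Suc_le_eq le_less)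
  then show ?thesis by (simp add: ones_from_def)
qed

lemma zeros_from_le: "zeros_from n x i \<le> n"
proof -
  have "zeros_from n x i \<le> card {..<n}"
    unfolding zeros_from_def by (rule card_mono) auto
  then show ?thesis by simp
qed

locale walk_potentials =
  fixes n k a b :: nat and x :: "nat \<Rightarrow> bool" and c :: real
  assumes a_pos: "1 \<le> a" and b_pos: "1 \<le> b" and c_pos: "0 < c"
begin

text \<open>The \<open>min\<close> accounts for the algorithm stopping once \<open>k\<close> ones have been found.\<close>

definition residual :: "real \<Rightarrow> real \<Rightarrow> nat \<Rightarrow> nat \<Rightarrow> real" where
  "residual u v i d = u * zeros_from n x i + v * min (ones_from n x i) (k - d)"

lemma residual_zero: "i < n \<Longrightarrow> \<not> x i \<Longrightarrow> residual u v i d = u + residual u v (Suc i) d"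
  by (simp add: residual_def zeros_from_step ones_from_step algebra_simps)

lemma residual_one:
  assumes "i < n" "x i" "d < k"
  shows "residual u v i d = v + residual u v (Suc i) (Suc d)"
proof -
  have "k - d = Suc (k - Suc d)" using assms by simp
  then have "min (ones_from n x i) (k - d) = 1 + min (ones_from n x (Suc i)) (k - Suc d)"
    using assms ones_from_step[of i n x] by (simp add: min_Suc_Suc)
  then show ?thesis
    unfolding residual_def using assms zeros_from_step[of i n x] by (simp add: algebra_simps)
qed

lemma residual_nonneg: "0 \<le> u \<Longrightarrow> 0 \<le> v \<Longrightarrow> 0 \<le> residual u v i d"
  by (simp add: residual_def)

lemma residual_Suc_le: "0 \<le> v \<Longrightarrow> residual u v i (Suc d) \<le> residual u v i d"
  unfolding residual_def by (intro add_left_mono mult_left_mono) auto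

lemma residual_le_Suc:
  assumes "0 \<le> v"
  shows "residual u v i d \<le> v + residual u v i (Suc d)"
proof -
  have "min (ones_from n x i) (k - d) \<le> 1 + min (ones_from n x i) (k - Suc d)"
    by (simp add: min_def, arith)
  then have "v * min (ones_from n x i) (k - d) \<le> v * (1 + real (min (ones_from n x i) (k - Suc d)))"
    using assms by (intro mult_left_mono) linarith+
  then show ?thesis unfolding residual_def by (simp add: algebra_simps)
qed

lemma residual_init_le: "0 \<le> u \<Longrightarrow> 0 \<le> v \<Longrightarrow> residual u v 0 0 \<le> u * n + v * k"
  unfolding residual_def using zeros_from_le[of n x 0] by (intro add_mono mult_left_mono) auto

text \<open>With \<open>exp c = (1-p)/p\<close>, the ruin bound is the gambler's-ruin martingale of the walk on index
  \<open>i\<close>; it is at least \<open>1\<close> on the wrong barrier, so its value at \<open>0\<close>, namely \<open>exp (-c*a)\<close> for a one and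
  \<open>exp (-c*b)\<close> for a zero, bounds the probability of misclassifying \<open>i\<close>.\<close>

definition ruin_bound :: "nat \<Rightarrow> int \<Rightarrow> real" where
  "ruin_bound i w = (if x i then exp (-c * (w + a)) else exp (c * (w - b)))"

abbreviation residual_error :: "nat \<Rightarrow> nat \<Rightarrow> real" where
  "residual_error \<equiv> residual (exp (-c*b)) (exp (-c*a))"

definition error_potential :: "walk_state \<times> bool \<Rightarrow> real" where
  "error_potential g = (case g of ((i,w,d),bad) \<Rightarrow>
     if bad then 1 else if n \<le> i \<or> k \<le> d then 0
     else ruin_bound i w - ruin_bound i 0 + residual_error i d)"

lemma ruin_bound_nonneg: "0 \<le> ruin_bound i w"
  by (simp add: ruin_bound_def)

lemma residual_error_nonneg: "0 \<le> residual_error i d"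
  by (simp add: residual_nonneg)

lemma residual_error_exit:
  assumes "i < n" "d < k"
  shows "residual_error i d = ruin_bound i 0 + residual_error (Suc i) (if x i then Suc d else d)"
  using residual_one[OF assms(1) _ assms(2)] residual_zero[OF assms(1)] by (simp add: ruin_bound_def)

lemma ruin_bound_ge_1:
  assumes "x i \<Longrightarrow> w \<le> - int a" "\<not> x i \<Longrightarrow> int b \<le> w"
  shows "1 \<le> ruin_bound i w"
proof (cases "x i")
  case True
  then have "c * (real_of_int w + real a) \<le> 0"
    using assms c_pos by (intro mult_nonneg_nonpos) auto
  then show ?thesis using True by (simp add: ruin_bound_def)
next
  case False
  then have "0 \<le> c * (real_of_int w - real b)"
    using assms c_pos by simp
  then show ?thesis using False by (simp add: ruin_bound_def)
qed

lemma ruin_bound_martingale: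
  assumes "0 < p" "p < 1" "exp c = (1-p)/p"
  shows "p * ruin_bound i (w + walk_incr (\<not> x i)) + (1-p) * ruin_bound i (w + walk_incr (x i)) =
    ruin_bound i w"
proof -
  have "exp (-c) = p/(1-p)" using assms by (simp add: exp_minus)
  then have one: "p * exp c + (1-p) * exp (-c) = 1" using assms by (simp add: field_simps)
  have "p * exp (-c * (real_of_int (w - 1) + real a)) + (1-p) * exp (-c * (real_of_int (w + 1) + real a))
      = exp (-c * (real_of_int w + real a)) * (p * exp c + (1-p) * exp (-c))"
    and "p * exp (c * (real_of_int (w + 1) - real b)) + (1-p) * exp (c * (real_of_int (w - 1) - real b))
      = exp (c * (real_of_int w - real b)) * (p * exp c + (1-p) * exp (-c))"
    by (simp_all add: algebra_simps flip: exp_add)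
  then show ?thesis using one by (simp add: ruin_bound_def walk_incr_def)
qed

lemma error_potential_nonneg: "0 \<le> error_potential g"
proof -
  obtain i w d bad where g: "g = ((i,w,d),bad)" by (metis prod.exhaust)
  have "0 \<le> ruin_bound i w - ruin_bound i 0 + residual_error i d" if "i < n" "d < k"
    using residual_error_exit[OF that] ruin_bound_nonneg[of i w] residual_error_nonneg[of "Suc i"]
    by (simp add: add_increasing2)
  then show ?thesis using g by (auto simp: error_potential_def)
qed

lemma error_potential_next_le:
  assumes active: "\<not> (n \<le> i \<or> k \<le> d)"
  shows "error_potential (tracked_next n k a b x ((i,w,d),False) h) \<le>
    ruin_bound i (w + walk_incr h) - ruin_bound i 0 + residual_error i d"
proof -
  let ?w = "w + walk_incr h"
  have exit: "residual_error i d = ruin_bound i 0 + residual_error (Suc i) (if x i then Suc d else d)"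
    using active by (intro residual_error_exit) auto
  have correct_exit: "error_potential ((i',0,d'),False) \<le> residual_error i' d'" for i' d'
    using residual_error_nonneg[of i' d'] by (simp add: error_potential_def)
  have wrong_exit: "1 \<le> ruin_bound i ?w" if "x i \<Longrightarrow> ?w \<le> - int a" "\<not> x i \<Longrightarrow> int b \<le> ?w"
    using that by (rule ruin_bound_ge_1)
  consider (up) "int b \<le> ?w" | (down) "\<not> int b \<le> ?w" "?w \<le> - int a" | (inside) "\<not> int b \<le> ?w" "\<not> ?w \<le> - int a"
    by blast
  then show ?thesis
  proof cases
    case up
    then show ?thesis
      using active exit correct_exit[of "Suc i" "Suc d"] wrong_exit ruin_bound_nonneg[of i ?w]
        residual_error_nonneg[of "Suc i" d]
      by (cases "x i") (auto simp: tracked_next_active error_potential_def)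
  next
    case down
    then show ?thesis
      using active exit correct_exit[of "Suc i" d] wrong_exit ruin_bound_nonneg[of i ?w]
        residual_error_nonneg[of "Suc i" "Suc d"]
      by (cases "x i") (auto simp: tracked_next_active error_potential_def)
  next
    case inside
    then show ?thesis using active by (simp add: tracked_next_active error_potential_def)
  qed
qed

lemma error_potential_supermartingale:
  assumes p: "0 < p" "p < 1" "exp c = (1-p)/p"
    and query: "\<not> (n \<le> fst (fst g) \<or> k \<le> snd (snd (fst g))) \<Longrightarrow> j = fst (fst g)"
  shows "p * error_potential (tracked_next n k a b x g (\<not> x j)) +
    (1-p) * error_potential (tracked_next n k a b x g (x j)) \<le> error_potential g"
proof -
  obtain i w d bad where g: "g = ((i,w,d),bad)" by (metis prod.exhaust)
  show ?thesis
  proof (cases "n \<le> i \<or> k \<le> d")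
    case True
    then show ?thesis using g by (simp add: tracked_next_halted algebra_simps)
  next
    case active: False
    then have j: "j = i" using query g by simp
    show ?thesis
    proof (cases bad)
      case True
      then show ?thesis using g active by (simp add: tracked_next_active error_potential_def algebra_simps)
    next
      case False
      have "p * error_potential (tracked_next n k a b x g (\<not> x j)) +
          (1-p) * error_potential (tracked_next n k a b x g (x j))
        \<le> p * (ruin_bound i (w + walk_incr (\<not> x i)) - ruin_bound i 0 + residual_error i d) +
          (1-p) * (ruin_bound i (w + walk_incr (x i)) - ruin_bound i 0 + residual_error i d)"
        using error_potential_next_le[OF active] p g False j
        by (intro add_mono mult_left_mono) auto
      also have "\<dots> = ruin_bound i w - ruin_bound i 0 + residual_error i d"
        using ruin_bound_martingale[OF p, of i w] by (simp add: algebra_simps)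
      also have "\<dots> = error_potential g" using g False active by (simp add: error_potential_def)
      finally show ?thesis .
    qed
  qed
qed

text \<open>The exponent of the time potential bounds the number of further responses needed to halt
  if all of them pointed the right way.  Each response decreases it with probability \<open>1 - p\<close>, so
  the potential shrinks in expectation by the factor \<open>p * exp \<mu> + (1-p) * exp (-\<mu>)\<close>.\<close>

definition barrier_gap :: "nat \<Rightarrow> int \<Rightarrow> real" where
  "barrier_gap i w = (if x i then real b - w else w + real a)"

abbreviation residual_gap :: "nat \<Rightarrow> nat \<Rightarrow> real" where
  "residual_gap \<equiv> residual a b"

definition time_potential :: "real \<Rightarrow> walk_state \<times> bool \<Rightarrow> real" where
  "time_potential \<mu> g = (case g of ((i,w,d),_) \<Rightarrow>
     if n \<le> i \<or> k \<le> d then 0 else exp (\<mu> * (barrier_gap i w - barrier_gap i 0 + residual_gap i d)))"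

lemma time_potential_nonneg: "0 \<le> time_potential \<mu> g"
  by (auto simp: time_potential_def split: prod.splits)

lemma time_potential_ge_1:
  assumes "walk_invariant n k a b x ((i,w,d),bad)" "\<not> (n \<le> i \<or> k \<le> d)" "0 \<le> \<mu>"
  shows "1 \<le> time_potential \<mu> ((i,w,d),bad)"
proof -
  have "0 \<le> barrier_gap i w"
    using assms(1) by (auto simp: walk_invariant_def barrier_gap_def)
  moreover have "barrier_gap i 0 \<le> residual_gap i d"
    using assms(2) residual_one[of i d a b] residual_zero[of i a b d] residual_nonneg[of a b "Suc i"]
    by (cases "x i") (auto simp: barrier_gap_def)
  ultimately show ?thesis using assms by (simp add: time_potential_def)
qed

lemma time_potential_next_le:
  assumes inv: "walk_invariant n k a b x ((i,w,d),bad)" and active: "\<not> (n \<le> i \<or> k \<le> d)"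
    and "0 \<le> \<mu>"
  shows "time_potential \<mu> (tracked_next n k a b x ((i,w,d),bad) h) \<le>
    exp (\<mu> * (barrier_gap i (w + walk_incr h) - barrier_gap i 0 + residual_gap i d))"
proof -
  let ?w = "w + walk_incr h"
  have w: "- int a < w" "w < int b" using inv by (auto simp: walk_invariant_def)
  have i: "i < n" "d < k" using active by auto
  have mono: "exp (\<mu> * residual_gap i' d') \<le> exp (\<mu> * (barrier_gap i ?w - barrier_gap i 0 + residual_gap i d))"
    if "residual_gap i' d' \<le> barrier_gap i ?w - barrier_gap i 0 + residual_gap i d" for i' d'
    using that \<open>0 \<le> \<mu>\<close> by (simp add: mult_left_mono)
  have "?w = int b \<or> ?w = - int a \<or> (- int a < ?w \<and> ?w < int b)"
    using w by (auto simp: walk_incr_def)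
  then consider (up) "?w = int b" | (down) "?w = - int a" | (inside) "- int a < ?w" "?w < int b"
    by blast
  then show ?thesis
  proof cases
    case up
    then have "residual_gap (Suc i) (Suc d) \<le> barrier_gap i ?w - barrier_gap i 0 + residual_gap i d"
      using residual_one[OF i(1) _ i(2)] residual_zero[OF i(1)] residual_Suc_le[where u=a and v=b and i="Suc i" and d=d]
      by (cases "x i") (auto simp: barrier_gap_def)
    then show ?thesis using up active mono[of "Suc i" "Suc d"]
      by (simp add: tracked_next_active time_potential_def barrier_gap_def)
  next
    case down
    then have "residual_gap (Suc i) d \<le> barrier_gap i ?w - barrier_gap i 0 + residual_gap i d"
      using residual_one[OF i(1) _ i(2)] residual_zero[OF i(1)] residual_le_Suc[where u=a and v=b and i="Suc i" and d=d]
      by (cases "x i") (auto simp: barrier_gap_def)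
    then show ?thesis using down active mono[of "Suc i" d] b_pos
      by (simp add: tracked_next_active time_potential_def barrier_gap_def)
  next
    case inside
    then show ?thesis using active by (simp add: tracked_next_active time_potential_def)
  qed
qed

lemma time_potential_supermartingale:
  assumes p: "0 < p" "p < 1" and "0 \<le> \<mu>" and beta: "p * exp \<mu> + (1-p) * exp (-\<mu>) \<le> \<beta>"
    and inv: "walk_invariant n k a b x g"
    and query: "\<not> (n \<le> fst (fst g) \<or> k \<le> snd (snd (fst g))) \<Longrightarrow> j = fst (fst g)"
  shows "p * time_potential \<mu> (tracked_next n k a b x g (\<not> x j)) +
    (1-p) * time_potential \<mu> (tracked_next n k a b x g (x j)) \<le> \<beta> * time_potential \<mu> g"
proof -
  obtain i w d bad where g: "g = ((i,w,d),bad)" by (metis prod.exhaust)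
  show ?thesis
  proof (cases "n \<le> i \<or> k \<le> d")
    case True
    then show ?thesis using g by (simp add: tracked_next_halted time_potential_def)
  next
    case active: False
    then have j: "j = i" using query g by simp
    define R where "R = barrier_gap i w - barrier_gap i 0 + residual_gap i d"
    have gap: "barrier_gap i (w + walk_incr (\<not> x i)) = barrier_gap i w + 1"
      "barrier_gap i (w + walk_incr (x i)) = barrier_gap i w - 1"
      by (auto simp: barrier_gap_def walk_incr_def)
    have "time_potential \<mu> (tracked_next n k a b x g (\<not> x j)) \<le> exp (\<mu> * (R + 1))"
      using time_potential_next_le[OF inv[unfolded g] active \<open>0 \<le> \<mu>\<close>, of "\<not> x i"]
      unfolding g j R_def gap(1) by (simp add: algebra_simps)
    moreover have "time_potential \<mu> (tracked_next n k a b x g (x j)) \<le> exp (\<mu> * (R - 1))"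
      using time_potential_next_le[OF inv[unfolded g] active \<open>0 \<le> \<mu>\<close>, of "x i"]
      unfolding g j R_def gap(2) by (simp add: algebra_simps)
    ultimately have "p * time_potential \<mu> (tracked_next n k a b x g (\<not> x j)) +
        (1-p) * time_potential \<mu> (tracked_next n k a b x g (x j))
      \<le> p * exp (\<mu> * (R + 1)) + (1-p) * exp (\<mu> * (R - 1))"
      using p by (intro add_mono mult_left_mono) auto
    also have "\<dots> = exp (\<mu> * R) * (p * exp \<mu> + (1-p) * exp (-\<mu>))"
      by (simp add: algebra_simps flip: exp_add)
    also have "\<dots> \<le> exp (\<mu> * R) * \<beta>" using beta by (intro mult_left_mono) auto
    also have "\<dots> = \<beta> * time_potential \<mu> g" using g active by (simp add: time_potential_def R_def)
    finally show ?thesis .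
  qed
qed

lemma wrong_output_le_potentials:
  assumes inv: "walk_invariant n k a b x ((i,w,d),bad)" and "0 \<le> \<mu>"
  shows "of_bool ((k \<le> d) \<noteq> TH n k x) \<le>
    error_potential ((i,w,d),bad) + time_potential \<mu> ((i,w,d),bad)"
proof -
  let ?g = "((i,w,d),bad)"
  consider (bad) bad | (halted) "\<not> bad" "n \<le> i \<or> k \<le> d" | (active) "\<not> (n \<le> i \<or> k \<le> d)"
    by blast
  then show ?thesis
  proof cases
    case bad
    then show ?thesis using time_potential_nonneg[of \<mu> ?g] by (simp add: error_potential_def)
  next
    case halted
    then show ?thesis
      using walk_output_correct[of n k a b x i w d] inv error_potential_nonneg[of ?g]
        time_potential_nonneg[of \<mu> ?g] by simp
  next
    case active
    then show ?thesis
      using time_potential_ge_1[OF inv active \<open>0 \<le> \<mu>\<close>] error_potential_nonneg[of ?g] by simp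
  qed
qed

lemma err_prob_le_potentials:
  assumes "0 \<le> p" "p \<le> 1" "0 \<le> \<mu>"
  shows "err_prob p n k (return_pmf (walk_query n k a b, walk_output n k a b)) T x \<le>
    hist_expect p (walk_query n k a b) x T
      (\<lambda>hs. error_potential (tracked_run n k a b x hs) + time_potential \<mu> (tracked_run n k a b x hs))"
proof -
  let ?g = "tracked_run n k a b x"
  have "err_prob p n k (return_pmf (walk_query n k a b, walk_output n k a b)) T x
      = measure_pmf.prob (responses p (walk_query n k a b) x T) {hs. walk_output n k a b hs \<noteq> TH n k x}"
    by (simp add: err_prob_def output_dist_def bind_return_pmf vimage_def)
  also have "\<dots> = hist_expect p (walk_query n k a b) x T (indicator {hs. walk_output n k a b hs \<noteq> TH n k x})"
    using assms by (simp add: prob_responses)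
  also have "\<dots> \<le> hist_expect p (walk_query n k a b) x T (\<lambda>hs. error_potential (?g hs) + time_potential \<mu> (?g hs))"
  proof (rule hist_expect_mono)
    fix hs
    obtain i w d bad where g: "?g hs = ((i,w,d),bad)" by (metis prod.exhaust)
    then have "walk_run n k a b hs = (i,w,d)"
      using fst_tracked_run[of n k a b x hs] by simp
    then have "walk_output n k a b hs = (k \<le> d)"
      by (simp add: walk_output_def)
    then show "indicator {hs. walk_output n k a b hs \<noteq> TH n k x} hs \<le> error_potential (?g hs) + time_potential \<mu> (?g hs)"
      using wrong_output_le_potentials[OF _ \<open>0 \<le> \<mu>\<close>] walk_invariant_run[OF a_pos b_pos, of n k x hs] g
      by (simp add: indicator_def)
  qed (use assms in auto)
  finally show ?thesis .
qed

end

lemma hist_expect_tracked_run_le: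
  assumes "0 \<le> p" "p \<le> 1" "0 \<le> r" "1 \<le> a" "1 \<le> b"
    and step: "\<And>g j. walk_invariant n k a b x g \<Longrightarrow>
      (\<not> (n \<le> fst (fst g) \<or> k \<le> snd (snd (fst g))) \<Longrightarrow> j = fst (fst g)) \<Longrightarrow>
      p * V (tracked_next n k a b x g (\<not> x j)) + (1-p) * V (tracked_next n k a b x g (x j)) \<le> r * V g"
  shows "hist_expect p (walk_query n k a b) x T (\<lambda>hs. V (tracked_run n k a b x hs)) \<le> r^T * V ((0,0,0),False)"
proof -
  have "hist_expect p (walk_query n k a b) x T (\<lambda>hs. V (tracked_run n k a b x hs)) \<le>
      r^T * V (tracked_run n k a b x [])"
  proof (rule hist_expect_supermartingale[where V="\<lambda>hs. V (tracked_run n k a b x hs)"])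
    show "p * V (tracked_run n k a b x (hs @ [\<not> x (walk_query n k a b hs)])) +
        (1-p) * V (tracked_run n k a b x (hs @ [x (walk_query n k a b hs)])) \<le> r * V (tracked_run n k a b x hs)"
      for hs
      unfolding tracked_run_snoc by (intro step walk_invariant_run[OF assms(4,5)] walk_query_tracked_run)
  qed (use assms in auto)
  then show ?thesis by (simp add: tracked_run_def)
qed

lemma walk_err_prob_le:
  assumes "1 \<le> n" "1 \<le> k" and a: "1 \<le> a" and b: "1 \<le> b" and p: "0 < p" "p < 1/2" and "0 \<le> \<mu>"
  defines "c \<equiv> ln ((1-p)/p)" and "\<beta> \<equiv> p * exp \<mu> + (1-p) * exp (-\<mu>)"
  shows "err_prob p n k (return_pmf (walk_query n k a b, walk_output n k a b)) T x
     \<le> exp (-c*b) * n + exp (-c*a) * k + \<beta>^T * exp (\<mu> * (real a * n + real b * k))"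
proof -
  have "0 < c" "exp c = (1-p)/p" unfolding c_def using p by (simp_all add: field_simps)
  interpret W: walk_potentials n k a b x c by unfold_locales (use a b \<open>0 < c\<close> in auto)
  have p01: "0 \<le> p" "p \<le> 1" using p by auto
  have "err_prob p n k (return_pmf (walk_query n k a b, walk_output n k a b)) T x
      \<le> 1^T * W.error_potential ((0,0,0),False) + \<beta>^T * W.time_potential \<mu> ((0,0,0),False)"
    using W.err_prob_le_potentials[OF p01 \<open>0 \<le> \<mu>\<close>, where T=T] unfolding hist_expect_add
  proof (elim order_trans, intro add_mono hist_expect_tracked_run_le[OF p01 _ a b])
    show "p * W.error_potential (tracked_next n k a b x g (\<not> x j)) +
        (1-p) * W.error_potential (tracked_next n k a b x g (x j)) \<le> 1 * W.error_potential g"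
      if "walk_invariant n k a b x g" "\<not> (n \<le> fst (fst g) \<or> k \<le> snd (snd (fst g))) \<Longrightarrow> j = fst (fst g)"
      for g j
      using W.error_potential_supermartingale[OF _ _ \<open>exp c = (1-p)/p\<close> that(2)] p by simp
    show "p * W.time_potential \<mu> (tracked_next n k a b x g (\<not> x j)) +
        (1-p) * W.time_potential \<mu> (tracked_next n k a b x g (x j)) \<le> \<beta> * W.time_potential \<mu> g"
      if "walk_invariant n k a b x g" "\<not> (n \<le> fst (fst g) \<or> k \<le> snd (snd (fst g))) \<Longrightarrow> j = fst (fst g)"
      for g j
      using W.time_potential_supermartingale[OF _ _ \<open>0 \<le> \<mu>\<close> _ that] p by (simp add: \<beta>_def)
  qed (use p in \<open>auto simp: \<beta>_def\<close>)
  also have "\<dots> \<le> exp (-c*b) * n + exp (-c*a) * k + \<beta>^T * exp (\<mu> * (real a * n + real b * k))"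
    using W.residual_init_le[of "exp (-c*b)" "exp (-c*a)"] W.residual_init_le[of a b] \<open>0 \<le> \<mu>\<close> assms(1,2) p
    by (intro add_mono mult_left_mono)
       (auto simp: W.error_potential_def W.time_potential_def \<beta>_def mult_left_mono)
  finally show ?thesis .
qed

section \<open>Statistics of the queries to a single index\<close>

text \<open>\<open>llr_exponent i q hs\<close> counts the \<open>False\<close> minus the \<open>True\<close> responses to index \<open>i\<close>; times
  \<open>ln ((1-p)/p)\<close> it is the log-likelihood ratio of the input \<open>x(i:=False)\<close> against an input \<open>x\<close>
  with \<open>x i\<close> (see \<open>hist_prob_flip\<close>).\<close>

definition llr_exponent :: "nat \<Rightarrow> (bool list \<Rightarrow> nat) \<Rightarrow> bool list \<Rightarrow> real" where
  "llr_exponent i q hs = (\<Sum>j<length hs. if q (take j hs) = i then (if hs!j then -1 else 1) else 0)"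

definition queries_to :: "nat \<Rightarrow> (bool list \<Rightarrow> nat) \<Rightarrow> bool list \<Rightarrow> real" where
  "queries_to i q hs = (\<Sum>j<length hs. if q (take j hs) = i then 1 else 0)"

lemma llr_exponent_Nil [simp]: "llr_exponent i q [] = 0"
  and queries_to_Nil [simp]: "queries_to i q [] = 0"
  by (simp_all add: llr_exponent_def queries_to_def)

lemma llr_exponent_snoc:
  "llr_exponent i q (hs@[h]) = llr_exponent i q hs + (if q hs = i then (if h then -1 else 1) else 0)"
proof -
  have "(\<Sum>j<length hs. if q (take j (hs@[h])) = i then (if (hs@[h])!j then -1 else 1) else 0) =
      llr_exponent i q hs"
    unfolding llr_exponent_def by (intro sum.cong) (auto simp: nth_append)
  then show ?thesis by (simp add: llr_exponent_def)
qed

lemma queries_to_snoc: "queries_to i q (hs@[h]) = queries_to i q hs + (if q hs = i then 1 else 0)"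
proof -
  have "(\<Sum>j<length hs. if q (take j (hs@[h])) = i then 1 else 0) = queries_to i q hs"
    unfolding queries_to_def by (intro sum.cong) (auto simp: nth_append)
  then show ?thesis by (simp add: queries_to_def)
qed

lemma queries_to_nonneg: "0 \<le> queries_to i q hs"
  by (simp add: queries_to_def sum_nonneg)

lemma queries_to_le: "queries_to i q hs \<le> length hs"
  using sum_mono[of "{..<length hs}" "\<lambda>j. if q (take j hs) = i then 1 else 0" "\<lambda>_. 1::real"]
  by (simp add: queries_to_def)

lemma llr_exponent_abs_le: "\<bar>llr_exponent i q hs\<bar> \<le> length hs"
proof -
  have "\<bar>llr_exponent i q hs\<bar> \<le> (\<Sum>j<length hs. \<bar>if q (take j hs) = i then (if hs!j then -1 else 1) else 0\<bar>)"
    unfolding llr_exponent_def by (rule sum_abs)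
  also have "\<dots> \<le> (\<Sum>j<length hs. (1::real))"
    by (intro sum_mono) auto
  finally show ?thesis by simp
qed

lemma sum_queries_to:
  assumes "\<And>hs. q hs < n"
  shows "(\<Sum>i<n. queries_to i q hs) = length hs"
proof -
  have "(\<Sum>i<n. queries_to i q hs) = (\<Sum>j<length hs. \<Sum>i<n. if q (take j hs) = i then 1 else 0)"
    unfolding queries_to_def by (rule sum.swap)
  also have "\<dots> = (\<Sum>j<length hs. (1::real))"
    using assms by (intro sum.cong refl) (simp add: sum.delta)
  finally show ?thesis by simp
qed

lemma hist_prob_flip:
  assumes p: "0 < p" "p < 1" and "x i"
  shows "hist_prob p (x(i:=False)) q hs = hist_prob p x q hs * exp (ln ((1-p)/p) * llr_exponent i q hs)"
proof (induction hs rule: rev_induct)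
  case (snoc h hs)
  define c where "c = ln ((1-p)/p)"
  have "exp c = (1-p)/p" "exp (-c) = p/(1-p)"
    using p by (simp_all add: c_def exp_minus)
  then have factor: "(if h = (x(i:=False)) (q hs) then 1-p else p) =
     (if h = x (q hs) then 1-p else p) * exp (c * (if q hs = i then (if h then -1 else 1) else 0))"
    using p \<open>x i\<close> by (auto simp: field_simps)
  show ?case
    unfolding hist_prob_snoc snoc factor llr_exponent_snoc c_def[symmetric]
    by (simp add: distrib_left exp_add algebra_simps)
qed simp

lemma hist_expect_flip:
  assumes "0 < p" "p < 1" "x i"
  shows "hist_expect p q (x(i:=False)) t f =
    hist_expect p q x t (\<lambda>hs. f hs * exp (ln ((1-p)/p) * llr_exponent i q hs))"
  unfolding hist_expect_def
  by (intro sum.cong refl) (simp add: hist_prob_flip[where x=x and i=i, OF assms] algebra_simps)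

text \<open>Under an input with \<open>\<not> x i\<close> each query to \<open>i\<close> moves \<open>llr_exponent i\<close> by \<open>+1\<close> with
  probability \<open>1 - p\<close> and by \<open>-1\<close> with probability \<open>p\<close>; the centred walk is a martingale whose
  quadratic variation is \<open>4 p (1 - p)\<close> per query (Wald's identity).\<close>

lemma hist_expect_llr_deviation:
  assumes "0 \<le> p" "p \<le> 1" "\<not> x i"
  shows "hist_expect p q x t (\<lambda>hs. (llr_exponent i q hs - (1-2*p) * queries_to i q hs)^2) =
    4*p*(1-p) * hist_expect p q x t (queries_to i q)"
proof (induction t)
  case (Suc t)
  let ?dev = "\<lambda>hs. (llr_exponent i q hs - (1-2*p) * queries_to i q hs)^2"
  let ?hit = "\<lambda>hs. if q hs = i then 1 else 0 :: real"
  have "p * ?dev (hs @ [\<not> x (q hs)]) + (1-p) * ?dev (hs @ [x (q hs)]) = ?dev hs + 4*p*(1-p) * ?hit hs" for hs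
    using \<open>\<not> x i\<close> by (cases "q hs = i") (auto simp: llr_exponent_snoc queries_to_snoc power2_eq_square algebra_simps)
  then have "hist_expect p q x (Suc t) ?dev = hist_expect p q x t ?dev + 4*p*(1-p) * hist_expect p q x t ?hit"
    by (simp add: hist_expect_Suc hist_expect_add hist_expect_cmult)
  moreover have "hist_expect p q x (Suc t) (queries_to i q) = hist_expect p q x t (queries_to i q) + hist_expect p q x t ?hit"
    by (simp add: hist_expect_Suc queries_to_snoc algebra_simps flip: hist_expect_add hist_expect_cmult)
  ultimately show ?case using Suc by (simp add: algebra_simps)
qed simp

definition alg_expect ::
  "real \<Rightarrow> strategy pmf \<Rightarrow> (nat \<Rightarrow> bool) \<Rightarrow> nat \<Rightarrow> (strategy \<Rightarrow> bool list \<Rightarrow> real) \<Rightarrow> real" where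
  "alg_expect p A x T f = (\<integral>s. hist_expect p (fst s) x T (f s) \<partial>measure_pmf A)"

text \<open>Boundedness on histories of length \<open>T\<close>, uniformly in the strategy, makes the integrand of
  \<open>alg_expect\<close> integrable for arbitrary (not necessarily finite) mixtures \<open>A\<close>.\<close>

definition hist_bounded :: "nat \<Rightarrow> (strategy \<Rightarrow> bool list \<Rightarrow> real) \<Rightarrow> bool" where
  "hist_bounded T f \<longleftrightarrow> (\<exists>B. \<forall>s hs. length hs = T \<longrightarrow> \<bar>f s hs\<bar> \<le> B)"

lemma hist_boundedI: "(\<And>s hs. \<bar>f s hs\<bar> \<le> B) \<Longrightarrow> hist_bounded T f"
  unfolding hist_bounded_def by blast

lemma hist_bounded_const: "hist_bounded T (\<lambda>s hs. c)"
  unfolding hist_bounded_def by auto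

lemma hist_bounded_if: "hist_bounded T (\<lambda>s hs. if P s hs then a else b)"
  by (rule hist_boundedI[where B="\<bar>a\<bar> + \<bar>b\<bar>"]) auto

lemma hist_bounded_add:
  assumes "hist_bounded T f" "hist_bounded T g"
  shows "hist_bounded T (\<lambda>s hs. f s hs + g s hs)"
proof -
  obtain B1 B2 where "\<And>s hs. length hs = T \<Longrightarrow> \<bar>f s hs\<bar> \<le> B1" "\<And>s hs. length hs = T \<Longrightarrow> \<bar>g s hs\<bar> \<le> B2"
    using assms by (auto simp: hist_bounded_def)
  then have "\<bar>f s hs + g s hs\<bar> \<le> B1 + B2" if "length hs = T" for s hs
    using abs_triangle_ineq[of "f s hs" "g s hs"] that by (smt (verit))
  then show ?thesis unfolding hist_bounded_def by blast
qed

lemma hist_bounded_mult: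
  assumes "hist_bounded T f" "hist_bounded T g"
  shows "hist_bounded T (\<lambda>s hs. f s hs * g s hs)"
proof -
  obtain B1 B2 where B: "\<And>s hs. length hs = T \<Longrightarrow> \<bar>f s hs\<bar> \<le> B1" "\<And>s hs. length hs = T \<Longrightarrow> \<bar>g s hs\<bar> \<le> B2"
    using assms by (auto simp: hist_bounded_def)
  have "\<bar>f s hs * g s hs\<bar> \<le> B1 * B2" if "length hs = T" for s hs
  proof -
    have "0 \<le> B1" using B(1)[OF that, of s] abs_ge_zero[of "f s hs"] by linarith
    then show ?thesis unfolding abs_mult by (rule mult_mono[OF B(1)[OF that] B(2)[OF that]]) simp
  qed
  then show ?thesis unfolding hist_bounded_def by blast
qed

lemma hist_bounded_diff:
  assumes "hist_bounded T f" "hist_bounded T g"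
  shows "hist_bounded T (\<lambda>s hs. f s hs - g s hs)"
proof -
  have "hist_bounded T (\<lambda>s hs. f s hs + (-1) * g s hs)"
    by (intro hist_bounded_add hist_bounded_mult assms hist_bounded_const)
  then show ?thesis by simp
qed

lemma hist_bounded_sum:
  "finite I \<Longrightarrow> (\<And>i. i \<in> I \<Longrightarrow> hist_bounded T (f i)) \<Longrightarrow> hist_bounded T (\<lambda>s hs. \<Sum>i\<in>I. f i s hs)"
  by (induction I rule: finite_induct) (auto intro: hist_bounded_add hist_bounded_const)

lemma hist_bounded_queries_to: "hist_bounded T (\<lambda>s hs. queries_to i (fst s) hs)"
  unfolding hist_bounded_def by (intro exI[of _ "real T"]) (use queries_to_le queries_to_nonneg in fastforce)

lemma hist_bounded_llr_exponent: "hist_bounded T (\<lambda>s hs. llr_exponent i (fst s) hs)"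
  unfolding hist_bounded_def by (intro exI[of _ "real T"]) (use llr_exponent_abs_le in fastforce)

lemma hist_bounded_exp_llr_exponent:
  "hist_bounded T (\<lambda>s hs. exp (c * llr_exponent i (fst s) hs))"
proof -
  have "c * llr_exponent i (fst s) hs \<le> \<bar>c\<bar> * T" if "length hs = T" for s hs
  proof -
    have "c * llr_exponent i (fst s) hs \<le> \<bar>c\<bar> * \<bar>llr_exponent i (fst s) hs\<bar>"
      by (metis abs_ge_self abs_mult)
    also have "\<dots> \<le> \<bar>c\<bar> * T"
      using llr_exponent_abs_le[of i "fst s" hs] that by (intro mult_left_mono) auto
    finally show ?thesis .
  qed
  then show ?thesis
    unfolding hist_bounded_def by (intro exI[of _ "exp (\<bar>c\<bar> * T)"]) auto
qed

lemmas hist_bounded_intros = hist_bounded_const hist_bounded_if hist_bounded_add hist_bounded_mult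
  hist_bounded_diff hist_bounded_sum hist_bounded_queries_to hist_bounded_llr_exponent
  hist_bounded_exp_llr_exponent

lemma alg_expect_integrable:
  assumes "0 \<le> p" "p \<le> 1" "hist_bounded T f"
  shows "integrable (measure_pmf A) (\<lambda>s. hist_expect p (fst s) x T (f s))"
proof -
  obtain B where B: "\<And>s hs. length hs = T \<Longrightarrow> \<bar>f s hs\<bar> \<le> B"
    using assms(3) by (auto simp: hist_bounded_def)
  have "\<bar>hist_expect p (fst s) x T (f s)\<bar> \<le> B" for s
    by (rule hist_expect_abs_le[OF assms(1,2) B])
  then show ?thesis
    by (intro measure_pmf.integrable_const_bound[where B=B]) auto
qed

lemma alg_expect_cong:
  "(\<And>s hs. length hs = T \<Longrightarrow> f s hs = g s hs) \<Longrightarrow> alg_expect p A x T f = alg_expect p A x T g"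
  unfolding alg_expect_def by (intro Bochner_Integration.integral_cong refl hist_expect_cong) auto

lemma alg_expect_const [simp]: "alg_expect p A x T (\<lambda>s hs. c) = c"
  by (simp add: alg_expect_def)

lemma alg_expect_cmult: "alg_expect p A x T (\<lambda>s hs. c * f s hs) = c * alg_expect p A x T f"
  by (simp add: alg_expect_def hist_expect_cmult)

lemma alg_expect_add:
  "0 \<le> p \<Longrightarrow> p \<le> 1 \<Longrightarrow> hist_bounded T f \<Longrightarrow> hist_bounded T g \<Longrightarrow>
   alg_expect p A x T (\<lambda>s hs. f s hs + g s hs) = alg_expect p A x T f + alg_expect p A x T g"
  unfolding alg_expect_def hist_expect_add by (intro Bochner_Integration.integral_add alg_expect_integrable)

lemma alg_expect_diff:
  assumes "0 \<le> p" "p \<le> 1" "hist_bounded T f" "hist_bounded T g"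
  shows "alg_expect p A x T (\<lambda>s hs. f s hs - g s hs) = alg_expect p A x T f - alg_expect p A x T g"
proof -
  have neg: "hist_bounded T (\<lambda>s hs. (-1) * g s hs)"
    by (intro hist_bounded_mult hist_bounded_const assms(4))
  show ?thesis
    using alg_expect_add[OF assms(1-3) neg, of A x] alg_expect_cmult[of p A x T "-1" g] by simp
qed

lemma alg_expect_sum:
  assumes "0 \<le> p" "p \<le> 1" "finite I" "\<And>i. i \<in> I \<Longrightarrow> hist_bounded T (f i)"
  shows "alg_expect p A x T (\<lambda>s hs. \<Sum>i\<in>I. f i s hs) = (\<Sum>i\<in>I. alg_expect p A x T (f i))"
  using assms(3,4)
proof (induction I rule: finite_induct)
  case (insert i I)
  then show ?case using assms(1,2) by (simp add: alg_expect_add hist_bounded_sum)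
qed simp

lemma alg_expect_mono:
  "0 \<le> p \<Longrightarrow> p \<le> 1 \<Longrightarrow> hist_bounded T f \<Longrightarrow> hist_bounded T g \<Longrightarrow>
   (\<And>s hs. length hs = T \<Longrightarrow> f s hs \<le> g s hs) \<Longrightarrow> alg_expect p A x T f \<le> alg_expect p A x T g"
  unfolding alg_expect_def by (intro integral_mono alg_expect_integrable hist_expect_mono) auto

lemma alg_expect_flip:
  assumes "0 < p" "p < 1" "x i"
  shows "alg_expect p A (x(i:=False)) T f =
    alg_expect p A x T (\<lambda>s hs. f s hs * exp (ln ((1-p)/p) * llr_exponent i (fst s) hs))"
  unfolding alg_expect_def
  by (intro Bochner_Integration.integral_cong refl hist_expect_flip[where x=x and i=i, OF assms])

lemma measure_bind_pmf:
  "measure_pmf.prob (bind_pmf A M) S = (\<integral>s. measure_pmf.prob (M s) S \<partial>measure_pmf A)"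
proof -
  have int: "integrable (measure_pmf A) (\<lambda>s. measure_pmf.prob (M s) S)"
    by (rule measure_pmf.integrable_const_bound[where B=1]) auto
  have "ennreal (measure_pmf.prob (bind_pmf A M) S) =
      (\<integral>\<^sup>+s. ennreal (measure_pmf.prob (M s) S) \<partial>measure_pmf A)"
    by (simp add: measure_pmf.emeasure_eq_measure[symmetric])
  also have "\<dots> = ennreal (\<integral>s. measure_pmf.prob (M s) S \<partial>measure_pmf A)"
    by (rule nn_integral_eq_integral[OF int]) auto
  finally show ?thesis by (simp add: integral_nonneg_AE)
qed

lemma err_prob_alg_expect:
  assumes "0 \<le> p" "p \<le> 1"
  shows "err_prob p n k A T x = alg_expect p A x T (\<lambda>s hs. if snd s hs = TH n k x then 0 else 1)"
  unfolding err_prob_def output_dist_def measure_bind_pmf alg_expect_def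
  by (intro Bochner_Integration.integral_cong refl)
     (auto simp: prob_responses[OF assms] vimage_def split: split_indicator intro!: hist_expect_cong)

lemma alg_expect_queries_to_nonneg: "0 \<le> p \<Longrightarrow> p \<le> 1 \<Longrightarrow> 0 \<le> alg_expect p A x T (\<lambda>s. queries_to i (fst s))"
  unfolding alg_expect_def hist_expect_def
  by (intro integral_nonneg_AE AE_I2 sum_nonneg mult_nonneg_nonneg hist_prob_nonneg queries_to_nonneg)

lemma alg_expect_sum_queries_to:
  assumes "valid_alg n A"
  shows "alg_expect p A x T (\<lambda>s hs. \<Sum>i<n. queries_to i (fst s) hs) = T"
proof -
  have "hist_expect p (fst s) x T (\<lambda>hs. \<Sum>i<n. queries_to i (fst s) hs) = T" if "s \<in> set_pmf A" for s
  proof -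
    have "\<And>hs. fst s hs < n" using assms that by (auto simp: valid_alg_def)
    then show ?thesis
      using hist_expect_cong[of T "\<lambda>hs. \<Sum>i<n. queries_to i (fst s) hs" "\<lambda>_. real T"] by (simp add: sum_queries_to)
  qed
  then have "alg_expect p A x T (\<lambda>s hs. \<Sum>i<n. queries_to i (fst s) hs) = (\<integral>s. real T \<partial>measure_pmf A)"
    unfolding alg_expect_def by (intro integral_cong_AE) (auto simp: AE_measure_pmf_iff)
  then show ?thesis by simp
qed

lemma sum_alg_expect_queries_to_le:
  assumes "valid_alg n A" "0 \<le> p" "p \<le> 1" "I \<subseteq> {..<n}"
  shows "(\<Sum>i\<in>I. alg_expect p A x T (\<lambda>s. queries_to i (fst s))) \<le> T"
proof -
  have "finite I" using assms(4) finite_subset by blast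
  then have "(\<Sum>i\<in>I. alg_expect p A x T (\<lambda>s. queries_to i (fst s))) =
      alg_expect p A x T (\<lambda>s hs. \<Sum>i\<in>I. queries_to i (fst s) hs)"
    using assms(2,3) by (intro alg_expect_sum[symmetric] hist_bounded_queries_to)
  also have "\<dots> \<le> alg_expect p A x T (\<lambda>s hs. \<Sum>i<n. queries_to i (fst s) hs)"
    using assms(2-4) \<open>finite I\<close>
    by (intro alg_expect_mono hist_bounded_intros) (auto intro!: sum_mono2 queries_to_nonneg)
  also have "\<dots> = T" by (rule alg_expect_sum_queries_to[OF assms(1)])
  finally show ?thesis .
qed

section \<open>The change-of-measure lower bound\<close>

definition likelihood_ratio :: "real \<Rightarrow> nat \<Rightarrow> strategy \<Rightarrow> bool list \<Rightarrow> real" where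
  "likelihood_ratio p i s hs = exp (ln ((1-p)/p) * llr_exponent i (fst s) hs)"

lemma likelihood_ratio_nonneg: "0 \<le> likelihood_ratio p i s hs"
  by (simp add: likelihood_ratio_def)

lemma hist_bounded_likelihood_ratio: "hist_bounded T (likelihood_ratio p i)"
  using hist_bounded_exp_llr_exponent[of T "ln ((1-p)/p)" i] by (simp add: likelihood_ratio_def[abs_def])

lemma alg_expect_likelihood_ratio_flip:
  assumes "0 < p" "p < 1" "x i"
  shows "alg_expect p A (x(i:=False)) T f = alg_expect p A x T (\<lambda>s hs. f s hs * likelihood_ratio p i s hs)"
  unfolding likelihood_ratio_def by (rule alg_expect_flip[where x=x and i=i, OF assms])

lemma alg_expect_likelihood_ratio:
  assumes "0 < p" "p < 1" "x i"
  shows "alg_expect p A x T (likelihood_ratio p i) = 1"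
  using alg_expect_likelihood_ratio_flip[where x=x and i=i, OF assms, of A T "\<lambda>s hs. 1"] by simp

lemma alg_expect_likelihood_ratio_pair:
  assumes "0 < p" "p < 1" "x i" "x j" "i \<noteq> j"
  shows "alg_expect p A x T (\<lambda>s hs. likelihood_ratio p i s hs * likelihood_ratio p j s hs) = 1"
proof -
  have "alg_expect p A x T (\<lambda>s hs. likelihood_ratio p i s hs * likelihood_ratio p j s hs) =
      alg_expect p A (x(i:=False)) T (likelihood_ratio p j)"
    by (subst alg_expect_likelihood_ratio_flip[where x=x and i=i, OF assms(1-3)]) (simp add: mult.commute)
  also have "\<dots> = 1"
    using assms by (intro alg_expect_likelihood_ratio) auto
  finally show ?thesis .
qed

lemma tail_le_markov_chebyshev:
  fixes V N M r t \<sigma> :: real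
  assumes "0 \<le> N" "0 < M" "0 < \<sigma>" "0 \<le> r" "r * M + \<sigma> \<le> t"
  shows "(if V \<le> t then 0 else 1) \<le> N / M + (V - r * N)^2 / \<sigma>^2"
proof (cases "V \<le> t \<or> M < N")
  case True
  then show ?thesis using assms by (auto simp: add_increasing2 add_increasing)
next
  case False
  then have "\<sigma> \<le> V - r * N"
    using assms mult_left_mono[of N M r] by linarith
  then have "\<sigma>^2 \<le> (V - r * N)^2"
    using assms by (intro power_mono) auto
  then show ?thesis using False assms by (simp add: add_increasing)
qed

text \<open>If index \<open>i\<close> is queried at most \<open>m\<close> times in expectation under an input without \<open>i\<close>,
  then \<open>llr_exponent i\<close>, whose drift is \<open>1 - 2p\<close> per query, rarely exceeds \<open>(1-2p) \<alpha>^2 m\<close>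
  (Markov for the number of queries, Chebyshev for the centred walk).\<close>

lemma alg_expect_llr_exponent_large_le:
  assumes p: "0 < p" "p < 1/2" and "\<not> x i" "0 < m" "1 < \<alpha>"
    and queries: "alg_expect p A x T (\<lambda>s. queries_to i (fst s)) \<le> m"
  shows "alg_expect p A x T (\<lambda>s hs. if llr_exponent i (fst s) hs \<le> (1-2*p) * \<alpha>^2 * m then 0 else 1) \<le>
    1/\<alpha> + 4*p*(1-p) / ((1-2*p)^2 * \<alpha>^2 * (\<alpha>-1)^2 * m)"
proof -
  have p01: "0 \<le> p" "p \<le> 1" using p by auto
  define t where "t = (1-2*p) * \<alpha>^2 * m"
  define \<sigma> where "\<sigma> = (1-2*p) * \<alpha> * (\<alpha>-1) * m"
  define N where "N (s::strategy) = queries_to i (fst s)" for s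
  define D where "D (s::strategy) hs = (llr_exponent i (fst s) hs - (1-2*p) * N s hs)^2" for s hs
  have pos: "0 < \<sigma>" "0 < \<alpha> * m" unfolding \<sigma>_def using assms by simp_all
  have "(1-2*p) * (\<alpha> * m) + \<sigma> = t" by (simp add: t_def \<sigma>_def power2_eq_square algebra_simps)
  then have tail: "(if llr_exponent i (fst s) hs \<le> t then 0 else 1) \<le> (1/(\<alpha>*m)) * N s hs + (1/\<sigma>^2) * D s hs"
    for s hs
    using tail_le_markov_chebyshev[OF queries_to_nonneg pos(2) pos(1), of "1-2*p"] p
    by (simp add: N_def D_def)
  have bounded: "hist_bounded T N" "hist_bounded T D"
    unfolding N_def[abs_def] D_def[abs_def] power2_eq_square
    by (intro hist_bounded_mult hist_bounded_diff hist_bounded_const hist_bounded_queries_to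
        hist_bounded_llr_exponent)+
  have deviation: "alg_expect p A x T D = 4*p*(1-p) * alg_expect p A x T N"
    by (simp add: alg_expect_def N_def[abs_def] D_def[abs_def]
        hist_expect_llr_deviation[where x=x and i=i, OF p01 \<open>\<not> x i\<close>])
  have "alg_expect p A x T (\<lambda>s hs. if llr_exponent i (fst s) hs \<le> t then 0 else 1)
      \<le> alg_expect p A x T (\<lambda>s hs. (1/(\<alpha>*m)) * N s hs + (1/\<sigma>^2) * D s hs)"
    by (intro alg_expect_mono p01 tail hist_bounded_intros bounded)
  also have "\<dots> = (1/(\<alpha>*m)) * alg_expect p A x T N + (1/\<sigma>^2) * (4*p*(1-p) * alg_expect p A x T N)"
    by (simp only: alg_expect_add[OF p01 hist_bounded_mult hist_bounded_mult] hist_bounded_const bounded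
        alg_expect_cmult deviation)
  also have "\<dots> \<le> (1/(\<alpha>*m)) * m + (1/\<sigma>^2) * (4*p*(1-p) * m)"
    using queries p pos unfolding N_def by (intro add_mono mult_left_mono) auto
  also have "\<dots> = 1/\<alpha> + 4*p*(1-p) / ((1-2*p)^2 * \<alpha>^2 * (\<alpha>-1)^2 * m)"
  proof -
    define Q where "Q = (1-2*p)^2 * \<alpha>^2 * (\<alpha>-1)^2 * m"
    have "0 < Q" "\<sigma>^2 = Q * m"
      using assms by (simp_all add: Q_def \<sigma>_def power_mult_distrib power2_eq_square)
    then have "(1/\<sigma>^2) * (4*p*(1-p) * m) = 4*p*(1-p) / Q"
      using \<open>0 < m\<close> by (simp add: field_simps)
    moreover have "(1/(\<alpha>*m)) * m = 1/\<alpha>"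
      using \<open>0 < m\<close> by simp
    ultimately show ?thesis by (simp add: Q_def)
  qed
  finally show ?thesis unfolding t_def .
qed

lemma alg_expect_llr_exponent_small:
  assumes "0 < p" "p < 1/2" "\<not> x i" "0 < m" "1 < \<alpha>"
    and "alg_expect p A x T (\<lambda>s. queries_to i (fst s)) \<le> m"
  shows "1 - 1/\<alpha> - 4*p*(1-p) / ((1-2*p)^2 * \<alpha>^2 * (\<alpha>-1)^2 * m) \<le>
    alg_expect p A x T (\<lambda>s hs. if llr_exponent i (fst s) hs \<le> (1-2*p) * \<alpha>^2 * m then 1 else 0)"
proof -
  have "0 \<le> p" "p \<le> 1" using assms by auto
  let ?small = "\<lambda>s hs. llr_exponent i (fst s) hs \<le> (1-2*p) * \<alpha>^2 * m"
  have "alg_expect p A x T (\<lambda>s hs. if ?small s hs then 1 else 0) =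
      alg_expect p A x T (\<lambda>s hs. 1 - (if ?small s hs then 0 else 1))"
    by (intro alg_expect_cong) simp
  also have "\<dots> = 1 - alg_expect p A x T (\<lambda>s hs. if ?small s hs then 0 else 1)"
    using alg_expect_diff[OF \<open>0 \<le> p\<close> \<open>p \<le> 1\<close> hist_bounded_const hist_bounded_if] by simp
  finally show ?thesis
    using alg_expect_llr_exponent_large_le[OF assms] by linarith
qed

text \<open>The truncated likelihood ratio of \<open>x(i:=False)\<close> against \<open>x\<close>: truncation at \<open>t\<close> keeps its
  second moment below \<open>exp (ln ((1-p)/p) * t)\<close> while, by the previous lemma, losing little mass.\<close>

definition capped_lr :: "real \<Rightarrow> real \<Rightarrow> nat \<Rightarrow> strategy \<Rightarrow> bool list \<Rightarrow> real" where
  "capped_lr p t i s hs = likelihood_ratio p i s hs * (if llr_exponent i (fst s) hs \<le> t then 1 else 0)"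

lemma hist_bounded_capped_lr: "hist_bounded T (capped_lr p t i)"
  unfolding capped_lr_def[abs_def] by (intro hist_bounded_mult hist_bounded_if hist_bounded_likelihood_ratio)

lemma alg_expect_reject_capped_lr_ge:
  assumes p: "0 < p" "p < 1/2" and "0 < m" "1 < \<alpha>" "x i"
    and reject: "\<not> TH n k (x(i:=False))" and err: "err_prob p n k A T (x(i:=False)) \<le> \<delta>"
    and queries: "alg_expect p A (x(i:=False)) T (\<lambda>s. queries_to i (fst s)) \<le> m"
  shows "1 - 1/\<alpha> - 4*p*(1-p) / ((1-2*p)^2 * \<alpha>^2 * (\<alpha>-1)^2 * m) - \<delta> \<le>
    alg_expect p A x T (\<lambda>s hs. (if snd s hs then 0 else 1) * capped_lr p ((1-2*p) * \<alpha>^2 * m) i s hs)"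
proof -
  have p01: "0 \<le> p" "p \<le> 1" and p1: "p < 1" using p by auto
  define t where "t = (1-2*p) * \<alpha>^2 * m"
  define small where "small (s::strategy) hs = (if llr_exponent i (fst s) hs \<le> t then 1 else 0 :: real)" for s hs
  define accept where "accept (s::strategy) hs = (if snd s hs then 1 else 0 :: real)" for s hs
  have bounded: "hist_bounded T small" "hist_bounded T accept"
    unfolding small_def[abs_def] accept_def[abs_def] by (intro hist_bounded_if)+
  have "alg_expect p A (x(i:=False)) T small - alg_expect p A (x(i:=False)) T accept =
      alg_expect p A (x(i:=False)) T (\<lambda>s hs. small s hs - accept s hs)"
    using p01 bounded by (intro alg_expect_diff[symmetric])
  also have "\<dots> \<le> alg_expect p A (x(i:=False)) T (\<lambda>s hs. (1 - accept s hs) * small s hs)"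
    by (intro alg_expect_mono p01 hist_bounded_intros bounded) (auto simp: small_def accept_def)
  also have "\<dots> = alg_expect p A x T (\<lambda>s hs. (if snd s hs then 0 else 1) * capped_lr p t i s hs)"
    unfolding alg_expect_likelihood_ratio_flip[where x=x and i=i, OF p(1) _ \<open>x i\<close>, OF p1]
    by (intro alg_expect_cong) (simp add: capped_lr_def small_def accept_def)
  finally have "alg_expect p A (x(i:=False)) T small - alg_expect p A (x(i:=False)) T accept \<le>
      alg_expect p A x T (\<lambda>s hs. (if snd s hs then 0 else 1) * capped_lr p t i s hs)" .
  moreover have "err_prob p n k A T (x(i:=False)) = alg_expect p A (x(i:=False)) T accept"
    unfolding err_prob_alg_expect[OF p01] using reject by (intro alg_expect_cong) (simp add: accept_def)
  then have "alg_expect p A (x(i:=False)) T accept \<le> \<delta>"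
    using err by simp
  moreover have "1 - 1/\<alpha> - 4*p*(1-p) / ((1-2*p)^2 * \<alpha>^2 * (\<alpha>-1)^2 * m) \<le> alg_expect p A (x(i:=False)) T small"
    unfolding small_def[abs_def] t_def using assms by (intro alg_expect_llr_exponent_small) auto
  ultimately show ?thesis unfolding t_def by linarith
qed

lemma capped_lr_mult_le:
  assumes "0 < p" "p < 1/2"
  shows "capped_lr p t i s hs * capped_lr p t j s hs \<le>
    (if i = j then exp (ln ((1-p)/p) * t) * likelihood_ratio p i s hs
     else likelihood_ratio p i s hs * likelihood_ratio p j s hs)"
proof -
  have "0 < ln ((1-p)/p)" using assms by (simp add: field_simps)
  then have "capped_lr p t i s hs \<le> exp (ln ((1-p)/p) * t)"
    by (auto simp: capped_lr_def likelihood_ratio_def mult_left_mono)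
  then show ?thesis
    using likelihood_ratio_nonneg[of p i s hs] likelihood_ratio_nonneg[of p j s hs]
    by (auto simp: capped_lr_def mult_right_mono)
qed

lemma alg_expect_sum_capped_lr_square_le:
  assumes p: "0 < p" "p < 1/2" and G: "finite G" "\<And>i. i \<in> G \<Longrightarrow> x i"
  shows "alg_expect p A x T (\<lambda>s hs. (\<Sum>i\<in>G. capped_lr p t i s hs)^2) \<le>
    card G * exp (ln ((1-p)/p) * t) + (card G)^2"
proof -
  have p01: "0 \<le> p" "p \<le> 1" using p by auto
  define L where "L = exp (ln ((1-p)/p) * t)"
  define g where "g i j s hs = (if i = j then L * likelihood_ratio p i s hs
    else likelihood_ratio p i s hs * likelihood_ratio p j s hs)" for i j s hs
  have bounded: "hist_bounded T (g i j)" for i j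
    unfolding g_def[abs_def]
    by (cases "i = j") (simp_all add: hist_bounded_mult hist_bounded_const hist_bounded_likelihood_ratio)
  have "alg_expect p A x T (\<lambda>s hs. (\<Sum>i\<in>G. capped_lr p t i s hs)^2) \<le>
      alg_expect p A x T (\<lambda>s hs. \<Sum>i\<in>G. \<Sum>j\<in>G. g i j s hs)"
    unfolding power2_eq_square sum_product g_def L_def
    by (intro alg_expect_mono sum_mono capped_lr_mult_le p p01 hist_bounded_sum hist_bounded_mult
        hist_bounded_capped_lr bounded[unfolded g_def L_def] G(1))
  also have "\<dots> = (\<Sum>i\<in>G. \<Sum>j\<in>G. if i = j then L else 1)"
    using p01 G bounded
  proof (simp add: alg_expect_sum hist_bounded_sum, intro sum.cong refl)
    fix i j assume "i \<in> G" "j \<in> G"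
    then show "alg_expect p A x T (g i j) = (if i = j then L else 1)"
      using p G(2) alg_expect_likelihood_ratio[of p x i A T] alg_expect_likelihood_ratio_pair[of p x i j A T]
      by (cases "i = j") (simp_all add: g_def[abs_def] alg_expect_cmult)
  qed
  also have "\<dots> \<le> (\<Sum>i\<in>G. L + card G)"
  proof (intro sum_mono)
    fix i assume "i \<in> G"
    have "(\<Sum>j\<in>G. if i = j then L else 1) \<le> (\<Sum>j\<in>G. (if i = j then L else 0) + 1)"
      by (intro sum_mono) (auto simp: L_def)
    then show "(\<Sum>j\<in>G. if i = j then L else 1) \<le> L + card G"
      using \<open>i \<in> G\<close> G(1) by (simp add: sum.distrib)
  qed
  finally show ?thesis by (simp add: L_def power2_eq_square algebra_simps)
qed

text \<open>Sum \<open>alg_expect_reject_capped_lr_ge\<close> over \<open>G\<close> and apply \<open>u v \<le> K u + v^2 / (4 K)\<close> with \<open>u\<close>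
  the rejection indicator, whose expectation under \<open>x\<close> is the error on \<open>x\<close>, and \<open>v\<close> the sum of the
  capped likelihood ratios.\<close>

lemma change_of_measure_bound:
  fixes \<delta> \<rho> :: real
  assumes p: "0 < p" "p < 1/2" and "0 < m" "1 < \<alpha>" "0 < K"
    and G: "finite G" "\<And>i. i \<in> G \<Longrightarrow> x i"
    and accept: "TH n k x" and reject: "\<And>i. i \<in> G \<Longrightarrow> \<not> TH n k (x(i:=False))"
    and err: "err_prob p n k A T x \<le> \<delta>" "\<And>i. i \<in> G \<Longrightarrow> err_prob p n k A T (x(i:=False)) \<le> \<delta>"
    and queries: "\<And>i. i \<in> G \<Longrightarrow> alg_expect p A (x(i:=False)) T (\<lambda>s. queries_to i (fst s)) \<le> m"
  defines "\<rho> \<equiv> 1 - 1/\<alpha> - 4*p*(1-p) / ((1-2*p)^2 * \<alpha>^2 * (\<alpha>-1)^2 * m)"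
    and "t \<equiv> (1-2*p) * \<alpha>^2 * m"
  shows "card G * (\<rho> - \<delta>) \<le> K * \<delta> + (card G * exp (ln ((1-p)/p) * t) + (card G)^2) / (4*K)"
proof -
  have p01: "0 \<le> p" "p \<le> 1" using p by auto
  define miss where "miss (s::strategy) hs = (if snd s hs then 0 else 1 :: real)" for s hs
  define Y where "Y (s::strategy) hs = (\<Sum>i\<in>G. capped_lr p t i s hs)" for s hs
  have bounded: "hist_bounded T miss" "hist_bounded T Y" "hist_bounded T (\<lambda>s hs. (Y s hs)^2)"
    unfolding miss_def[abs_def] Y_def[abs_def] power2_eq_square
    by (intro hist_bounded_if hist_bounded_mult hist_bounded_sum G(1) hist_bounded_capped_lr)+
  have amgm: "miss s hs * Y s hs \<le> K * miss s hs + (1/(4*K)) * (Y s hs)^2" for s hs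
  proof -
    have "0 \<le> (Y s hs - 2*K)^2 / (4*K)" using \<open>0 < K\<close> by simp
    then have "Y s hs \<le> K + (1/(4*K)) * (Y s hs)^2"
      using \<open>0 < K\<close> by (simp add: power2_eq_square field_simps)
    then show ?thesis using \<open>0 < K\<close> by (simp add: miss_def)
  qed
  have "card G * (\<rho> - \<delta>) \<le> (\<Sum>i\<in>G. alg_expect p A x T (\<lambda>s hs. miss s hs * capped_lr p t i s hs))"
    using sum_mono[of G "\<lambda>_. \<rho> - \<delta>"] alg_expect_reject_capped_lr_ge[OF p \<open>0 < m\<close> \<open>1 < \<alpha>\<close> G(2) reject err(2) queries]
    unfolding \<rho>_def t_def miss_def[abs_def] by fastforce
  also have "\<dots> = alg_expect p A x T (\<lambda>s hs. miss s hs * Y s hs)"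
    unfolding Y_def sum_distrib_left
    by (intro alg_expect_sum[symmetric] p01 G(1) hist_bounded_mult bounded(1) hist_bounded_capped_lr)
  also have "\<dots> \<le> alg_expect p A x T (\<lambda>s hs. K * miss s hs + (1/(4*K)) * (Y s hs)^2)"
    by (intro alg_expect_mono p01 amgm hist_bounded_intros bounded)
  also have "\<dots> = K * alg_expect p A x T miss + (1/(4*K)) * alg_expect p A x T (\<lambda>s hs. (Y s hs)^2)"
    by (simp only: alg_expect_add[OF p01 hist_bounded_mult hist_bounded_mult] hist_bounded_const
        bounded alg_expect_cmult)
  also have "\<dots> \<le> K * \<delta> + (1/(4*K)) * (card G * exp (ln ((1-p)/p) * t) + (card G)^2)"
  proof (intro add_mono mult_left_mono)
    show "alg_expect p A x T miss \<le> \<delta>"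
      using err(1) accept err_prob_alg_expect[OF p01] by (simp add: miss_def[abs_def])
    show "alg_expect p A x T (\<lambda>s hs. (Y s hs)^2) \<le> card G * exp (ln ((1-p)/p) * t) + (card G)^2"
      unfolding Y_def using p G by (intro alg_expect_sum_capped_lr_square_le) auto
  qed (use \<open>0 < K\<close> in auto)
  finally show ?thesis by simp
qed

section \<open>The lower bound for a fixed input length\<close>

definition input_of_set :: "nat set \<Rightarrow> nat \<Rightarrow> bool" where
  "input_of_set S = (\<lambda>i. i \<in> S)"

lemma input_of_set_remove: "(input_of_set S)(i:=False) = input_of_set (S - {i})"
  by (rule ext) (auto simp: input_of_set_def)

lemma input_of_set_inputs: "S \<subseteq> {..<n} \<Longrightarrow> input_of_set S \<in> inputs n"
  by (auto simp: inputs_def input_of_set_def)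

lemma TH_input_of_set: "S \<subseteq> {..<n} \<Longrightarrow> TH n k (input_of_set S) = (k \<le> card S)"
proof -
  assume "S \<subseteq> {..<n}"
  then have "{i. i < n \<and> input_of_set S i} = S" by (auto simp: input_of_set_def)
  then show ?thesis by (simp add: TH_def)
qed

lemma err_prob_le_worst_err:
  assumes "x \<in> inputs n"
  shows "err_prob p n k A T x \<le> worst_err p n k A T"
  unfolding worst_err_def
proof (rule cSUP_upper[OF assms])
  show "bdd_above ((err_prob p n k A T) ` inputs n)"
    by (rule bdd_aboveI[where M=1]) (auto simp: err_prob_def)
qed

definition subsets_card :: "nat \<Rightarrow> nat \<Rightarrow> nat set set" where
  "subsets_card n j = {S. S \<subseteq> {..<n} \<and> card S = j}"

lemma finite_subsets_card [simp]: "finite (subsets_card n j)"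
  by (rule finite_subset[of _ "Pow {..<n}"]) (auto simp: subsets_card_def)

lemma card_Sigma_subsets_card: "card (Sigma (subsets_card n k) (\<lambda>S. S)) = card (subsets_card n k) * k"
  by (subst card_SigmaI) (auto simp: subsets_card_def intro: finite_subset)

lemma card_Sigma_subsets_card_compl:
  "card (Sigma (subsets_card n j) (\<lambda>S. {..<n} - S)) = card (subsets_card n j) * (n - j)"
proof -
  have "card ({..<n} - S) = n - j" if "S \<in> subsets_card n j" for S
    using that by (auto simp: subsets_card_def card_Diff_subset finite_subset)
  then show ?thesis by (subst card_SigmaI) auto
qed

lemma sum_Sigma_subsets_card_remove:
  assumes "1 \<le> k"
  shows "(\<Sum>(S,i)\<in>Sigma (subsets_card n k) (\<lambda>S. S). f (S - {i}) i) =
    (\<Sum>(S',i)\<in>Sigma (subsets_card n (k-1)) (\<lambda>S'. {..<n} - S'). f S' i)"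
proof (rule sum.reindex_bij_witness[where i="\<lambda>(S',i). (insert i S', i)" and j="\<lambda>(S,i). (S - {i}, i)"])
  fix a assume "a \<in> Sigma (subsets_card n k) (\<lambda>S. S)"
  then obtain S i where "a = (S,i)" "S \<subseteq> {..<n}" "card S = k" "i \<in> S"
    by (auto simp: subsets_card_def)
  moreover have "finite S" using \<open>S \<subseteq> {..<n}\<close> finite_subset by blast
  ultimately show "(case case a of (S, i) \<Rightarrow> (S - {i}, i) of (S', i) \<Rightarrow> (insert i S', i)) = a"
    and "(case a of (S, i) \<Rightarrow> (S - {i}, i)) \<in> Sigma (subsets_card n (k-1)) (\<lambda>S'. {..<n} - S')"
    and "(case case a of (S, i) \<Rightarrow> (S - {i}, i) of (S', i) \<Rightarrow> f S' i) = (case a of (S, i) \<Rightarrow> f (S - {i}) i)"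
    by (auto simp: subsets_card_def)
next
  fix b assume "b \<in> Sigma (subsets_card n (k-1)) (\<lambda>S'. {..<n} - S')"
  then obtain S' i where "b = (S',i)" "S' \<subseteq> {..<n}" "card S' = k-1" "i < n" "i \<notin> S'"
    by (auto simp: subsets_card_def)
  moreover have "finite S'" using \<open>S' \<subseteq> {..<n}\<close> finite_subset by blast
  ultimately show "(case case b of (S', i) \<Rightarrow> (insert i S', i) of (S, i) \<Rightarrow> (S - {i}, i)) = b"
    and "(case b of (S', i) \<Rightarrow> (insert i S', i)) \<in> Sigma (subsets_card n k) (\<lambda>S. S)"
    using assms by (auto simp: subsets_card_def)
qed

lemma exists_ge_average:
  fixes f :: "'a \<Rightarrow> real" and c :: real
  assumes "finite A" "A \<noteq> {}" "card A * c \<le> (\<Sum>a\<in>A. f a)"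
  shows "\<exists>a\<in>A. c \<le> f a"
proof (rule ccontr)
  assume "\<not> ?thesis"
  then have "(\<Sum>a\<in>A. f a) < (\<Sum>a\<in>A. c)"
    using assms(1,2) by (intro sum_strict_mono) (auto simp: not_le)
  then show False using assms(3) by simp
qed

lemma sum_pairs_queries_to_le:
  assumes "valid_alg n A" "1 \<le> k" "0 \<le> p" "p \<le> 1"
  shows "(\<Sum>(S,i)\<in>Sigma (subsets_card n k) (\<lambda>S. S).
      alg_expect p A (input_of_set (S - {i})) T (\<lambda>s. queries_to i (fst s))) \<le> card (subsets_card n (k-1)) * real T"
proof -
  have "(\<Sum>(S,i)\<in>Sigma (subsets_card n k) (\<lambda>S. S).
      alg_expect p A (input_of_set (S - {i})) T (\<lambda>s. queries_to i (fst s))) =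
      (\<Sum>S'\<in>subsets_card n (k-1). \<Sum>i\<in>{..<n} - S'. alg_expect p A (input_of_set S') T (\<lambda>s. queries_to i (fst s)))"
    unfolding sum_Sigma_subsets_card_remove[OF assms(2),
      where f="\<lambda>S' i. alg_expect p A (input_of_set S') T (\<lambda>s. queries_to i (fst s))"]
    by (rule sum.Sigma[symmetric]) auto
  also have "\<dots> \<le> (\<Sum>S'\<in>subsets_card n (k-1). real T)"
    using assms by (intro sum_mono sum_alg_expect_queries_to_le) auto
  finally show ?thesis by simp
qed

text \<open>Averaging over all \<open>k\<close>-sets \<open>S\<close> and \<open>i \<in> S\<close>: the expected number of queries to \<open>i\<close> on
  input \<open>S - {i}\<close> sums, over the pairs, to at most \<open>T\<close> per \<open>(k-1)\<close>-set, so by Markov's inequality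
  only a fraction \<open>1/\<alpha>\<close> of the pairs exceed \<open>m\<close>.\<close>

lemma exists_set_rarely_queried:
  assumes valid: "valid_alg n A" and k: "1 \<le> k" "k \<le> n" and "0 < m" "1 < \<alpha>"
    and T: "\<alpha> * T \<le> m * (n - k + 1)" and p: "0 \<le> p" "p \<le> 1"
  shows "\<exists>S. S \<subseteq> {..<n} \<and> card S = k \<and>
     k * (1 - 1/\<alpha>) \<le> card {i\<in>S. alg_expect p A (input_of_set (S - {i})) T (\<lambda>s. queries_to i (fst s)) \<le> m}"
proof -
  define e where "e S i = alg_expect p A (input_of_set (S - {i})) T (\<lambda>s. queries_to i (fst s))" for S i
  define good where "good S = {i\<in>S. e S i \<le> m}" for S
  define P where "P = Sigma (subsets_card n k) (\<lambda>S. S)"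
  define B where "B = {(S,i)\<in>P. m < e S i}"
  have "finite P"
    unfolding P_def by (intro finite_SigmaI finite_subsets_card) (auto simp: subsets_card_def intro: finite_subset)
  have B: "B \<subseteq> P" "P - B = Sigma (subsets_card n k) good"
    by (auto simp: B_def P_def good_def)
  have "finite B" using finite_subset[OF B(1) \<open>finite P\<close>] .
  have card_P: "card P = card (subsets_card n (k-1)) * (n - k + 1)"
    using sum_Sigma_subsets_card_remove[OF k(1), where n=n and f="\<lambda>_ _. 1::nat"] card_Sigma_subsets_card_compl[of n "k-1"] k
    by (simp add: P_def Suc_diff_le)
  have "card B * m \<le> (\<Sum>(S,i)\<in>B. e S i)"
    using sum_mono[of B "\<lambda>_. m" "\<lambda>(S,i). e S i"] by (force simp: B_def)
  also have "\<dots> \<le> (\<Sum>(S,i)\<in>P. e S i)"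
    using B \<open>finite P\<close> alg_expect_queries_to_nonneg[OF p] by (intro sum_mono2) (auto simp: e_def)
  also have "\<dots> \<le> card (subsets_card n (k-1)) * real T"
    using sum_pairs_queries_to_le[OF valid k(1) p, where T=T] by (simp add: P_def e_def)
  also have "\<dots> \<le> card (subsets_card n (k-1)) * (m * real (n - k + 1) / \<alpha>)"
    using T \<open>1 < \<alpha>\<close> by (intro mult_left_mono) (simp_all add: field_simps)
  also have "\<dots> = m * (card P / \<alpha>)"
    unfolding card_P of_nat_mult by simp
  finally have "m * card B \<le> m * (card P / \<alpha>)"
    by (simp only: mult.commute)
  then have "card B \<le> card P / \<alpha>"
    using \<open>0 < m\<close> by (rule mult_left_le_imp_le)
  have "(\<Sum>S\<in>subsets_card n k. card (good S)) = card P - card B"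
    unfolding card_Diff_subset[OF \<open>finite B\<close> B(1), symmetric] B(2)
    by (rule card_SigmaI[symmetric]) (auto simp: good_def subsets_card_def intro: finite_subset)
  then have "real (\<Sum>S\<in>subsets_card n k. card (good S)) = real (card P) - card B"
    using card_mono[OF \<open>finite P\<close> B(1)] by (simp add: of_nat_diff)
  with \<open>card B \<le> card P / \<alpha>\<close> have "card (subsets_card n k) * (k * (1 - 1/\<alpha>)) \<le> (\<Sum>S\<in>subsets_card n k. card (good S))"
    using card_Sigma_subsets_card[of n k] by (simp add: P_def algebra_simps)
  moreover have "subsets_card n k \<noteq> {}"
    using k by (auto simp: subsets_card_def intro!: exI[of _ "{..<k}"])
  ultimately have "\<exists>S\<in>subsets_card n k. k * (1 - 1/\<alpha>) \<le> card (good S)"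
    by (intro exists_ge_average) auto
  then show ?thesis by (auto simp: subsets_card_def good_def e_def)
qed

lemma am_gm_parameter_choice:
  fixes g \<rho> \<rho>0 \<delta> L :: real
  assumes "0 < g" "0 < \<delta>" "0 < \<rho>0" "\<rho>0 \<le> \<rho>" "\<delta> \<le> \<rho>0/8" "\<delta> \<le> \<rho>0^2/8"
    and bound: "\<And>K. 0 < K \<Longrightarrow> g * (\<rho> - \<delta>) \<le> K * \<delta> + (g * L + g^2) / (4*K)"
  shows "g * (\<rho>0^2 / 2) \<le> L * \<delta>"
proof -
  define K where "K = g * \<rho>0 / (4*\<delta>)"
  have "0 < K" unfolding K_def using assms by simp
  have "K * \<delta> = g * \<rho>0 / 4" "(g * L + g^2) / (4*K) = (L + g) * \<delta> / \<rho>0"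
    unfolding K_def using assms by (simp_all add: power2_eq_square field_simps)
  moreover have "g * (\<rho>0 - \<delta>) \<le> g * (\<rho> - \<delta>)"
    using assms by (intro mult_left_mono) auto
  ultimately have "g * (\<rho>0 - \<delta>) \<le> g * \<rho>0 / 4 + (L + g) * \<delta> / \<rho>0"
    using bound[OF \<open>0 < K\<close>] by linarith
  then have "(g * (\<rho>0 - \<delta>) - g * \<rho>0 / 4) * \<rho>0 \<le> (L + g) * \<delta>"
    using \<open>0 < \<rho>0\<close> by (simp add: field_simps)
  then have main: "g * (\<rho>0 * (3/4 * \<rho>0 - \<delta>) - \<delta>) \<le> L * \<delta>"
    by (simp add: algebra_simps)
  have "\<rho>0 * \<delta> \<le> \<rho>0 * (\<rho>0 / 8)"
    using assms by (intro mult_left_mono) auto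
  moreover have "\<rho>0 * (3/4 * \<rho>0 - \<delta>) - \<delta> = 3/4 * (\<rho>0 * \<rho>0) - \<rho>0 * \<delta> - \<delta>"
    by (simp add: algebra_simps)
  ultimately have "\<rho>0^2 / 2 \<le> \<rho>0 * (3/4 * \<rho>0 - \<delta>) - \<delta>"
    using assms(6) unfolding power2_eq_square by linarith
  then have "g * (\<rho>0^2 / 2) \<le> g * (\<rho>0 * (3/4 * \<rho>0 - \<delta>) - \<delta>)"
    using assms by (intro mult_left_mono) auto
  with main show ?thesis by linarith
qed

lemma rarely_queried_card_le:
  fixes \<alpha> m \<delta> p :: real
  assumes S: "S \<subseteq> {..<n}" "card S = k" "1 \<le> k" and p: "0 < p" "p < 1/2" and "1 < \<alpha>" "0 < m"
    and G: "G \<subseteq> S" "G \<noteq> {}"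
      "\<And>i. i \<in> G \<Longrightarrow> alg_expect p A (input_of_set (S - {i})) T (\<lambda>s. queries_to i (fst s)) \<le> m"
    and err: "worst_err p n k A T \<le> \<delta>" "0 < \<delta>"
    and small: "4*p*(1-p) / ((1-2*p)^2 * \<alpha>^2 * (\<alpha>-1)^2 * m) \<le> (\<alpha>-1)/(2*\<alpha>)"
      "\<delta> \<le> (\<alpha>-1)/(2*\<alpha>) / 8" "\<delta> \<le> ((\<alpha>-1)/(2*\<alpha>))^2 / 8"
  shows "card G * (((\<alpha>-1)/(2*\<alpha>))^2 / 2) \<le> exp (D_KL p * \<alpha>^2 * m) * \<delta>"
proof (rule am_gm_parameter_choice)
  have "finite S" using S(1) finite_subset by blast
  then show "0 < real (card G)" using G(1,2) by (simp add: card_gt_0_iff finite_subset)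
  show "0 < (\<alpha>-1)/(2*\<alpha>)" using \<open>1 < \<alpha>\<close> by simp
  show "(\<alpha>-1)/(2*\<alpha>) \<le> 1 - 1/\<alpha> - 4*p*(1-p) / ((1-2*p)^2 * \<alpha>^2 * (\<alpha>-1)^2 * m)"
  proof -
    have "1 - 1/\<alpha> = 2 * ((\<alpha>-1)/(2*\<alpha>))" using \<open>1 < \<alpha>\<close> by (simp add: field_simps)
    then show ?thesis using small(1) by linarith
  qed
  have err_le: "err_prob p n k A T (input_of_set S') \<le> \<delta>" if "S' \<subseteq> {..<n}" for S'
    using err_prob_le_worst_err[OF input_of_set_inputs[OF that]] err(1) by (rule order_trans)
  show "real (card G) * (1 - 1/\<alpha> - 4*p*(1-p) / ((1-2*p)^2 * \<alpha>^2 * (\<alpha>-1)^2 * m) - \<delta>)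
      \<le> K * \<delta> + (card G * exp (D_KL p * \<alpha>^2 * m) + (real (card G))^2) / (4*K)" if "0 < K" for K
  proof -
    have "finite G" using G(1) \<open>finite S\<close> finite_subset by blast
    moreover have "input_of_set S i" if "i \<in> G" for i
      using that G(1) by (auto simp: input_of_set_def)
    moreover have "TH n k (input_of_set S)"
      using S by (simp add: TH_input_of_set)
    moreover have "\<not> TH n k ((input_of_set S)(i:=False))" if "i \<in> G" for i
    proof -
      have "S - {i} \<subseteq> {..<n}" "card (S - {i}) = k - 1"
        using that G(1) S \<open>finite S\<close> by auto
      then show ?thesis using S(3) by (simp add: input_of_set_remove TH_input_of_set)
    qed
    moreover have "err_prob p n k A T ((input_of_set S)(i:=False)) \<le> \<delta>" for i
      using S(1) by (auto simp: input_of_set_remove intro!: err_le)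
    moreover have "alg_expect p A ((input_of_set S)(i:=False)) T (\<lambda>s. queries_to i (fst s)) \<le> m"
      if "i \<in> G" for i
      using G(3)[OF that] by (simp add: input_of_set_remove)
    ultimately have "card G * (1 - 1/\<alpha> - 4*p*(1-p) / ((1-2*p)^2 * \<alpha>^2 * (\<alpha>-1)^2 * m) - \<delta>) \<le>
        K * \<delta> + (card G * exp (ln ((1-p)/p) * ((1-2*p) * \<alpha>^2 * m)) + (card G)^2) / (4*K)"
      using change_of_measure_bound[OF p \<open>0 < m\<close> \<open>1 < \<alpha>\<close> that] err_le[OF S(1)] by blast
    moreover have "ln ((1-p)/p) * ((1-2*p) * \<alpha>^2 * m) = D_KL p * \<alpha>^2 * m"
      by (simp add: D_KL_def)
    ultimately show ?thesis by simp
  qed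
qed (use err small in auto)

lemma lower_bound_fixed_n:
  fixes \<alpha> m \<delta> p :: real
  assumes valid: "valid_alg n A" and k: "1 \<le> k" "k \<le> n" and p: "0 < p" "p < 1/2"
    and "1 < \<alpha>" "0 < m" and T: "\<alpha> * T \<le> m * real (n - k + 1)"
    and err: "worst_err p n k A T \<le> \<delta>" "0 < \<delta>"
    and small: "4*p*(1-p) / ((1-2*p)^2 * \<alpha>^2 * (\<alpha>-1)^2 * m) \<le> (\<alpha>-1)/(2*\<alpha>)"
      "\<delta> \<le> (\<alpha>-1)/(2*\<alpha>) / 8" "\<delta> \<le> ((\<alpha>-1)/(2*\<alpha>))^2 / 8"
  shows "ln (k/\<delta>) + ln ((1-1/\<alpha>) * ((\<alpha>-1)/(2*\<alpha>))^2 / 2) \<le> D_KL p * \<alpha>^2 * m"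
proof -
  define C where "C = (1-1/\<alpha>) * ((\<alpha>-1)/(2*\<alpha>))^2 / 2"
  have "0 < 1 - 1/\<alpha>" "0 < C"
    using \<open>1 < \<alpha>\<close> by (simp_all add: C_def field_simps)
  obtain S where S: "S \<subseteq> {..<n}" "card S = k"
    and many: "k * (1 - 1/\<alpha>) \<le> card {i\<in>S. alg_expect p A (input_of_set (S-{i})) T (\<lambda>s. queries_to i (fst s)) \<le> m}"
    using exists_set_rarely_queried[OF valid k \<open>0 < m\<close> \<open>1 < \<alpha>\<close> T, of p] p by auto
  let ?G = "{i\<in>S. alg_expect p A (input_of_set (S-{i})) T (\<lambda>s. queries_to i (fst s)) \<le> m}"
  have "0 < k * (1 - 1/\<alpha>)" using k \<open>0 < 1 - 1/\<alpha>\<close> by simp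
  then have "0 < real (card ?G)" using many by linarith
  then have "?G \<noteq> {}" by (metis card.empty of_nat_0 order.irrefl)
  then have "card ?G * (((\<alpha>-1)/(2*\<alpha>))^2 / 2) \<le> exp (D_KL p * \<alpha>^2 * m) * \<delta>"
    by (intro rarely_queried_card_le[OF S k(1) p \<open>1 < \<alpha>\<close> \<open>0 < m\<close> _ _ _ err small]) auto
  moreover have "k * (1 - 1/\<alpha>) * (((\<alpha>-1)/(2*\<alpha>))^2 / 2) \<le> card ?G * (((\<alpha>-1)/(2*\<alpha>))^2 / 2)"
    using many by (intro mult_right_mono) auto
  ultimately have "k * C \<le> exp (D_KL p * \<alpha>^2 * m) * \<delta>"
    unfolding C_def by (simp add: mult.assoc)
  then have "k * C / \<delta> \<le> exp (D_KL p * \<alpha>^2 * m)"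
    using \<open>0 < \<delta>\<close> by (simp add: pos_divide_le_eq)
  then have "ln (k * C / \<delta>) \<le> ln (exp (D_KL p * \<alpha>^2 * m))"
    using k \<open>0 < \<delta>\<close> \<open>0 < C\<close> by (subst ln_le_cancel_iff) auto
  moreover have "ln (k * C / \<delta>) = ln (k/\<delta>) + ln C"
    using k \<open>0 < \<delta>\<close> \<open>0 < C\<close> by (simp add: ln_mult_pos[symmetric])
  ultimately show ?thesis by (simp add: C_def)
qed

section \<open>Non-asymptotic forms of the two bounds\<close>

lemma nat_ceiling_log_bounds:
  fixes c z :: real
  assumes "0 < c" "1 < z"
  shows "ln z \<le> c * nat \<lceil>ln z / c\<rceil>" "nat \<lceil>ln z / c\<rceil> \<le> ln z / c + 1" "1 \<le> nat \<lceil>ln z / c\<rceil>"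
proof -
  have "0 < ln z / c" using assms by simp
  then have "real (nat \<lceil>ln z / c\<rceil>) = of_int \<lceil>ln z / c\<rceil>" by simp
  moreover have "ln z \<le> c * of_int \<lceil>ln z / c\<rceil>"
    using mult_left_mono[OF le_of_int_ceiling[of "ln z / c"], of c] assms(1) by simp
  ultimately show "ln z \<le> c * nat \<lceil>ln z / c\<rceil>"
    by simp
  show "nat \<lceil>ln z / c\<rceil> \<le> ln z / c + 1"
    using \<open>0 < ln z / c\<close> of_int_ceiling_le_add_one[of "ln z / c"] by simp
  show "1 \<le> nat \<lceil>ln z / c\<rceil>" using \<open>0 < ln z / c\<close> by linarith
qed

lemma exp_neg_le_inverse:
  fixes y z :: real
  assumes "0 < z" "ln z \<le> y"
  shows "exp (-y) \<le> 1 / z"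
proof -
  have "exp (-y) \<le> exp (- ln z)" using assms(2) by simp
  also have "\<dots> = 1 / z" using assms by (simp add: exp_minus inverse_eq_divide)
  finally show ?thesis .
qed

lemma upper_bound_fixed_n:
  fixes p \<mu> \<kappa> \<delta> :: real
  assumes "1 \<le> k" "k \<le> n" and p: "0 < p" "p < 1/2" and "0 < \<delta>" "\<delta> \<le> 1"
    and "0 < \<mu>" and "0 \<le> \<kappa>" and \<beta>: "p * exp \<mu> + (1-p) * exp (-\<mu>) \<le> exp (-(\<mu>*\<kappa>))"
  defines "c \<equiv> ln ((1-p)/p)"
  assumes T: "(ln (3 * real k / \<delta>)/c + 1) * n + (ln (3 * real n / \<delta>)/c + 1) * k + ln (3/\<delta>)/\<mu> \<le> \<kappa> * T"
  shows "\<exists>A. valid_alg n A \<and> worst_err p n k A T \<le> \<delta>"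
proof -
  have "0 < c" unfolding c_def using p by (simp add: field_simps)
  define a where "a = nat \<lceil>ln (3 * real k / \<delta>) / c\<rceil>"
  define b where "b = nat \<lceil>ln (3 * real n / \<delta>) / c\<rceil>"
  have "1 < 3 * real k / \<delta>" "1 < 3 * real n / \<delta>" using assms by (simp_all add: field_simps)
  note a = nat_ceiling_log_bounds[OF \<open>0 < c\<close> this(1), folded a_def]
  note b = nat_ceiling_log_bounds[OF \<open>0 < c\<close> \<open>1 < 3 * real n / \<delta>\<close>, folded b_def]
  define A where "A = return_pmf (walk_query n k a b, walk_output n k a b)"
  have "valid_alg n A" using assms walk_query_less[of n k a b] by (simp add: A_def valid_alg_def)
  have "exp (-c*b) * n \<le> \<delta>/3" "exp (-c*a) * k \<le> \<delta>/3"
    using exp_neg_le_inverse[of "3 * real n / \<delta>" "c*b"] exp_neg_le_inverse[of "3 * real k / \<delta>" "c*a"] a b assms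
    by (simp_all add: field_simps)
  moreover have "(p * exp \<mu> + (1-p) * exp (-\<mu>))^T * exp (\<mu> * (real a * n + real b * k)) \<le> \<delta>/3"
  proof -
    have "real a * n \<le> (ln (3 * real k / \<delta>)/c + 1) * n" "real b * k \<le> (ln (3 * real n / \<delta>)/c + 1) * k"
      using a(2) b(2) by (intro mult_right_mono; simp)+
    then have "real a * n + real b * k + ln (3/\<delta>)/\<mu> \<le> \<kappa> * T"
      using T by linarith
    then have "ln (3/\<delta>) \<le> \<mu> * (\<kappa> * T - (real a * n + real b * k))"
      using \<open>0 < \<mu>\<close> by (simp add: field_simps)
    then have "exp (-(\<mu> * (\<kappa> * T - (real a * n + real b * k)))) \<le> \<delta>/3"
      using exp_neg_le_inverse[of "3/\<delta>"] \<open>0 < \<delta>\<close> by simp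
    moreover have "(p * exp \<mu> + (1-p) * exp (-\<mu>))^T \<le> exp (-(\<mu>*\<kappa>))^T"
      using \<beta> p by (intro power_mono) auto
    moreover have "exp (-(\<mu>*\<kappa>))^T * exp (\<mu> * (real a * n + real b * k)) =
        exp (-(\<mu> * (\<kappa> * T - (real a * n + real b * k))))"
      by (simp add: exp_of_nat_mult[symmetric] algebra_simps flip: exp_add)
    ultimately show ?thesis
      by (smt (verit) exp_gt_zero mult_right_mono)
  qed
  ultimately have "err_prob p n k A T x \<le> \<delta>" for x
    using walk_err_prob_le[of n k a b p \<mu> T x] assms a(3) b(3) by (simp add: A_def c_def)
  then have "worst_err p n k A T \<le> \<delta>"
    unfolding worst_err_def by (intro cSUP_least) (auto simp: inputs_def)
  with \<open>valid_alg n A\<close> show ?thesis by blast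
qed

lemma exists_exp_moment_le:
  fixes p \<kappa> :: real
  assumes p: "0 < p" "p < 1/2" and "0 < \<kappa>" "\<kappa> < 1 - 2*p"
  shows "\<exists>\<mu>>0. p * exp \<mu> + (1-p) * exp (-\<mu>) \<le> exp (-(\<mu>*\<kappa>))"
proof -
  define g where "g \<mu> = p * exp (\<mu>*(1+\<kappa>)) + (1-p) * exp (-(\<mu>*(1-\<kappa>)))" for \<mu> :: real
  have "DERIV g 0 :> p*(1+\<kappa>) - (1-p)*(1-\<kappa>)"
    unfolding g_def by (auto intro!: derivative_eq_intros simp: algebra_simps)
  moreover have "p*(1+\<kappa>) - (1-p)*(1-\<kappa>) < 0"
    using assms by (simp add: algebra_simps)
  ultimately obtain d where "d > 0" "\<And>h. h > 0 \<Longrightarrow> h < d \<Longrightarrow> g (0 + h) < g 0"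
    using DERIV_neg_dec_right by blast
  moreover have "g 0 = 1" by (simp add: g_def)
  ultimately have "0 < d/2" "g (d/2) < 1"
    by auto
  moreover have "p * exp \<mu> + (1-p) * exp (-\<mu>) = exp (-(\<mu>*\<kappa>)) * g \<mu>" for \<mu>
    unfolding g_def by (simp add: algebra_simps flip: exp_add)
  ultimately show ?thesis
    by (intro exI[of _ "d/2"]) (simp add: mult_left_le)
qed

lemma D_KL_pos: "0 < p \<Longrightarrow> p < 1/2 \<Longrightarrow> 0 < D_KL p"
  unfolding D_KL_def by (intro mult_pos_pos) (auto simp: field_simps)

lemma lower_bound_queries:
  fixes \<alpha> M \<delta> p :: real
  assumes valid: "valid_alg n A" and k: "1 \<le> k" "k \<le> n" and p: "0 < p" "p < 1/2"
    and "1 < \<alpha>" "0 < M" and err: "worst_err p n k A T \<le> \<delta>" "0 < \<delta>"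
    and small: "4*p*(1-p) / ((1-2*p)^2 * \<alpha>^2 * (\<alpha>-1)^2 * M) \<le> (\<alpha>-1)/(2*\<alpha>)"
      "\<delta> \<le> (\<alpha>-1)/(2*\<alpha>) / 8" "\<delta> \<le> ((\<alpha>-1)/(2*\<alpha>))^2 / 8"
  defines "C \<equiv> ln ((1-1/\<alpha>) * ((\<alpha>-1)/(2*\<alpha>))^2 / 2)"
  assumes large: "D_KL p * \<alpha>^2 * M < ln (k/\<delta>) + C"
  shows "real (n - k + 1) * (ln (k/\<delta>) + C) \<le> D_KL p * \<alpha>^3 * T"
proof -
  define m where "m = max (\<alpha> * T / real (n - k + 1)) M"
  have "M \<le> m" "0 < m" "\<alpha> * T / real (n - k + 1) \<le> m"
    using \<open>0 < M\<close> by (auto simp: m_def)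
  moreover from this(3) have "\<alpha> * T \<le> m * real (n - k + 1)"
    by (simp add: pos_divide_le_eq del: of_nat_add)
  moreover have "4*p*(1-p) / ((1-2*p)^2 * \<alpha>^2 * (\<alpha>-1)^2 * m) \<le> (\<alpha>-1)/(2*\<alpha>)"
    using small(1) p \<open>1 < \<alpha>\<close> \<open>0 < M\<close> \<open>M \<le> m\<close>
    by (elim order_trans[rotated]) (intro divide_left_mono mult_left_mono; simp)
  ultimately have bound: "ln (k/\<delta>) + C \<le> D_KL p * \<alpha>^2 * m"
    unfolding C_def by (intro lower_bound_fixed_n[OF valid k p \<open>1 < \<alpha>\<close> _ _ err _ small(2,3)])
  then have "(D_KL p * \<alpha>^2) * M < (D_KL p * \<alpha>^2) * m"
    using large by linarith
  then have "M < m"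
    using D_KL_pos[OF p] \<open>1 < \<alpha>\<close> by (simp add: mult_less_cancel_left_pos)
  then have "m = \<alpha> * T / real (n - k + 1)"
    by (simp add: m_def max_def split: if_splits)
  with bound show ?thesis
    by (simp add: field_simps power3_eq_cube power2_eq_square)
qed

lemma cube_one_plus_eighth_le:
  fixes \<eta> :: real
  assumes "0 < \<eta>" "\<eta> < 1"
  shows "(1 + \<eta>/8)^3 * (1 - \<eta>) \<le> (1 - \<eta>/32)^2"
proof -
  define u where "u = \<eta>/8"
  have u: "0 < u" "u \<le> 1/8" using assms by (auto simp: u_def)
  have "u * u \<le> u / 8" "u * u * u \<le> u / 64"
    using u mult_right_mono[of u "1/8" u] mult_mono[of "u * u" "u/8" u "1/8"] by auto
  moreover have "(1 + u)^3 = 1 + 3*u + 3*(u*u) + u*u*u"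
    by (simp add: power3_eq_cube algebra_simps)
  ultimately have "(1 + u)^3 \<le> 1 + 4*u"
    using u by linarith
  then have "(1 + \<eta>/8)^3 \<le> 1 + \<eta>/2"
    by (simp add: u_def)
  then have "(1 + \<eta>/8)^3 * (1 - \<eta>) \<le> (1 + \<eta>/2) * (1 - \<eta>)"
    using assms by (intro mult_right_mono) auto
  also have "\<dots> = 1 - \<eta>/2 - \<eta> * \<eta> / 2"
    by (simp add: field_simps)
  also have "\<dots> \<le> 1 - \<eta>/16 + \<eta> * \<eta> / 1024"
    using assms mult_nonneg_nonneg[of \<eta> \<eta>] by linarith
  also have "\<dots> = (1 - \<eta>/32)^2"
    by (simp add: power2_eq_square field_simps)
  finally show ?thesis .
qed

lemma lower_bound_rescale:
  fixes \<eta> D L C N x T :: real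
  assumes "0 < \<eta>" "\<eta> < 1" "0 < D" "0 \<le> L" "0 \<le> x"
    and "(1 - \<eta>/32) * x \<le> N" "(1 - \<eta>/32) * L \<le> L + C"
    and bound: "N * (L + C) \<le> D * (1 + \<eta>/8)^3 * T"
  shows "(1 - \<eta>) * (x * L / D) \<le> T"
proof -
  have "(1 + \<eta>/8)^3 * (1 - \<eta>) * (x * L) \<le> (1 - \<eta>/32)^2 * (x * L)"
    using cube_one_plus_eighth_le[OF assms(1,2)] assms(4,5) by (intro mult_right_mono) auto
  also have "\<dots> = ((1 - \<eta>/32) * x) * ((1 - \<eta>/32) * L)"
    by (simp add: power2_eq_square mult_ac)
  also have "\<dots> \<le> N * (L + C)"
  proof (rule mult_mono)
    have "0 \<le> (1 - \<eta>/32) * x" using assms by simp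
    then show "0 \<le> N" using assms(6) by linarith
    show "0 \<le> (1 - \<eta>/32) * L" using assms by simp
  qed (use assms in auto)
  finally have "(D * (1 + \<eta>/8)^3) * ((1 - \<eta>) * (x * L / D)) \<le> (D * (1 + \<eta>/8)^3) * T"
    using bound \<open>0 < D\<close> by (simp add: mult_ac)
  then show ?thesis
    using \<open>0 < D\<close> \<open>0 < \<eta>\<close> by (simp add: mult_le_cancel_left_pos pos_divide_le_eq mult.commute)
qed

lemma exists_pos_divide_le:
  fixes a b e :: real
  assumes "0 < b" "0 < e"
  shows "\<exists>M>0. a / (b * M) \<le> e"
proof (intro exI conjI)
  let ?M = "\<bar>a\<bar> / (b * e) + 1"
  show "0 < ?M" using assms by (simp add: add_nonneg_pos)
  have "e * (b * ?M) = \<bar>a\<bar> + e * b"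
    using assms by (simp add: field_simps)
  moreover have "0 < e * b" using assms by simp
  ultimately have "a \<le> e * (b * ?M)"
    using abs_ge_self[of a] by linarith
  then show "a / (b * ?M) \<le> e"
    using assms \<open>0 < ?M\<close> by (simp add: pos_divide_le_eq mult.commute)
qed

lemma kappa_floor_ge:
  fixes p \<eta> x :: real
  assumes p: "0 < p" "p < 1/2" and "0 < \<eta>" "0 \<le> x"
  defines "c \<equiv> ln ((1-p)/p)" and "\<kappa> \<equiv> (1-2*p) * ((1 + \<eta>/2) / (1 + \<eta>))"
  shows "(1 + \<eta>/2) * x - c \<le> c * (\<kappa> * nat \<lfloor>(1 + \<eta>) * (x / D_KL p)\<rfloor>)"
proof -
  define f where "f = (1 + \<eta>/2) / (1 + \<eta>)"
  have "0 < c" "D_KL p = (1-2*p) * c"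
    using p by (simp_all add: c_def D_KL_def field_simps)
  have "0 < f" "f < 1"
    using \<open>0 < \<eta>\<close> by (simp_all add: f_def)
  then have "0 < \<kappa>" "\<kappa> \<le> 1"
    using p unfolding \<kappa>_def f_def[symmetric] by (simp_all add: mult_le_one)
  have "\<kappa> * ((1 + \<eta>) * (x / D_KL p)) = (f * (1 + \<eta>)) * ((1-2*p) * x / ((1-2*p) * c))"
    by (simp add: \<kappa>_def f_def \<open>D_KL p = (1-2*p) * c\<close> mult_ac)
  also have "\<dots> = (1 + \<eta>/2) * x / c"
    using p \<open>0 < \<eta>\<close> by (simp add: f_def)
  finally have "c * (\<kappa> * ((1 + \<eta>) * (x / D_KL p) - 1)) = (1 + \<eta>/2) * x - c * \<kappa>"
    using \<open>0 < c\<close> by (simp add: right_diff_distrib)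
  moreover have "0 \<le> (1 + \<eta>) * (x / D_KL p)"
    using assms D_KL_pos[OF p] by simp
  then have "c * (\<kappa> * ((1 + \<eta>) * (x / D_KL p) - 1)) \<le> c * (\<kappa> * nat \<lfloor>(1 + \<eta>) * (x / D_KL p)\<rfloor>)"
    using \<open>0 < \<kappa>\<close> \<open>0 < c\<close> by (intro mult_left_mono) linarith+
  moreover have "c * \<kappa> \<le> c"
    using \<open>\<kappa> \<le> 1\<close> \<open>0 < c\<close> by simp
  ultimately show ?thesis by linarith
qed

lemma upper_bound_with_slack:
  fixes p \<eta> \<mu> \<delta> :: real
  assumes "1 \<le> k" "k \<le> n" and p: "0 < p" "p < 1/2" and "0 < \<eta>" "0 < \<delta>" "\<delta> \<le> 1"
    and "0 \<le> ln (k/\<delta>)" and "0 < \<mu>"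
    and moment: "p * exp \<mu> + (1-p) * exp (-\<mu>) \<le> exp (-(\<mu> * ((1-2*p) * ((1 + \<eta>/2) / (1 + \<eta>)))))"
  defines "c \<equiv> ln ((1-p)/p)"
  assumes slack: "(ln 3 + 2*c) * real (n + 1) + k * ln (3 * n / \<delta>) + c/\<mu> * ln (3 / \<delta>) \<le> \<eta>/2 * (n * ln (k/\<delta>))"
  shows "\<exists>T A. valid_alg n A \<and> real T \<le> (1 + \<eta>) * (n * ln (k/\<delta>) / D_KL p) \<and> worst_err p n k A T \<le> \<delta>"
proof -
  define L where "L = ln (k/\<delta>)"
  define T where "T = nat \<lfloor>(1 + \<eta>) * (n * L / D_KL p)\<rfloor>"
  define \<kappa> where "\<kappa> = (1-2*p) * ((1 + \<eta>/2) / (1 + \<eta>))"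
  have "0 < c" using p by (simp add: c_def field_simps)
  have "0 \<le> \<kappa>" using p \<open>0 < \<eta>\<close> by (simp add: \<kappa>_def)
  have "0 \<le> (1 + \<eta>) * (n * L / D_KL p)"
    using assms D_KL_pos[OF p] by (simp add: L_def)
  then have "real T \<le> (1 + \<eta>) * (n * L / D_KL p)"
    unfolding T_def by linarith
  have "ln (3 * real k / \<delta>) = ln 3 + L"
    using assms by (simp add: L_def ln_mult_pos[symmetric] mult.assoc)
  then have "c * ((ln (3 * real k / \<delta>)/c + 1) * n + (ln (3 * real n / \<delta>)/c + 1) * k + ln (3 / \<delta>)/\<mu>)
      = n * L + n * ln 3 + c * n + k * ln (3 * n / \<delta>) + c * k + c/\<mu> * ln (3 / \<delta>)"
    using \<open>0 < c\<close> by (simp add: field_simps)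
  also have "\<dots> \<le> n * L + (ln 3 + 2*c) * (n + 1) + k * ln (3 * n / \<delta>) + c/\<mu> * ln (3 / \<delta>) - c"
  proof -
    have "c * k \<le> c * n" "0 < ln (3::real)"
      using assms \<open>0 < c\<close> by (simp_all add: mult_left_mono)
    then show ?thesis
      by (simp add: algebra_simps) (use \<open>0 < c\<close> \<open>c * k \<le> c * n\<close> \<open>0 < ln 3\<close> in linarith)
  qed
  also have "\<dots> \<le> (1 + \<eta>/2) * (n * L) - c"
    using slack by (simp add: L_def algebra_simps)
  also have "\<dots> \<le> c * (\<kappa> * T)"
    unfolding T_def \<kappa>_def c_def using kappa_floor_ge[OF p \<open>0 < \<eta>\<close>] assms by (simp add: L_def)
  finally have "(ln (3 * real k / \<delta>)/c + 1) * n + (ln (3 * real n / \<delta>)/c + 1) * k + ln (3 / \<delta>)/\<mu> \<le> \<kappa> * T"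
    using \<open>0 < c\<close> by (rule mult_left_le_imp_le)
  then obtain A where "valid_alg n A" "worst_err p n k A T \<le> \<delta>"
    using upper_bound_fixed_n[OF assms(1-4,6,7) \<open>0 < \<mu>\<close> \<open>0 \<le> \<kappa>\<close>] moment by (auto simp: c_def \<kappa>_def)
  with \<open>real T \<le> (1 + \<eta>) * (n * L / D_KL p)\<close> show ?thesis
    unfolding L_def by blast
qed

lemma ln_le_2_sqrt: "0 < y \<Longrightarrow> ln y \<le> 2 * sqrt y"
  using ln_le_minus_one[of "sqrt y"] by (simp add: ln_sqrt)

section \<open>The asymptotic regime\<close>

locale threshold_regime =
  fixes k :: "nat \<Rightarrow> nat" and \<delta> :: "nat \<Rightarrow> real"
  assumes k_smallo: "(\<lambda>n. real (k n)) \<in> o(\<lambda>n. real n)"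
    and \<delta>_tendsto: "\<delta> \<longlonglongrightarrow> 0"
    and k_pos: "\<forall>\<^sub>F n in sequentially. 1 \<le> k n"
    and \<delta>_pos: "\<forall>\<^sub>F n in sequentially. 0 < \<delta> n"
begin

lemma eventually_\<delta>_le: "0 < r \<Longrightarrow> \<forall>\<^sub>F n in sequentially. \<delta> n \<le> r"
  using order_tendstoD(2)[OF \<delta>_tendsto, of r] by (auto elim: eventually_mono)

lemma eventually_k_le: "0 < r \<Longrightarrow> \<forall>\<^sub>F n in sequentially. real (k n) \<le> r * real n"
  using landau_o.smallD[OF k_smallo, of r] by (auto elim: eventually_mono)

lemma eventually_ln_ratio_ge: "\<forall>\<^sub>F n in sequentially. C \<le> ln (k n / \<delta> n)"
  using eventually_\<delta>_le[OF exp_gt_zero[of "-C"]] \<delta>_pos k_pos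
proof eventually_elim
  case (elim n)
  then have "C \<le> - ln (\<delta> n)"
    using ln_le_cancel_iff[of "\<delta> n" "exp (-C)"] by auto
  moreover have "0 \<le> ln (real (k n))" "ln (k n / \<delta> n) = ln (k n) - ln (\<delta> n)"
    using elim by (simp_all add: ln_divide_pos)
  ultimately show ?case by linarith
qed

lemma eventually_k_ln_le:
  assumes "0 < r"
  shows "\<forall>\<^sub>F n in sequentially. k n * ln (3 * n / \<delta> n) \<le> r * (n * ln (k n / \<delta> n))"
proof -
  define s where "s = min r 1 / 4"
  have s: "0 < s" "s \<le> 1/4" "4 * s \<le> r" using assms by (auto simp: s_def)
  then have "0 < s^2" by simp
  show ?thesis
    using eventually_k_le[OF \<open>0 < s^2\<close>] \<delta>_pos k_pos eventually_ln_ratio_ge[of "max 1 (ln 3)"]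
      eventually_ge_at_top[of 1]
  proof eventually_elim
    case (elim n)
    define L where "L = ln (k n / \<delta> n)"
    have "0 < real (k n)" "0 < real n" "1 \<le> L" "ln 3 \<le> L"
      using elim by (auto simp: L_def)
    have "ln (3 * n / \<delta> n) = ln 3 + ln (n / k n) + L"
      using elim \<open>0 < real (k n)\<close> \<open>0 < real n\<close>
      by (simp add: L_def ln_mult_pos ln_divide_pos)
    moreover have "k n * ln (n / k n) \<le> 2 * s * n"
    proof -
      have "k n * ln (n / k n) \<le> k n * (2 * sqrt (n / k n))"
        using \<open>0 < real (k n)\<close> \<open>0 < real n\<close> by (intro mult_left_mono ln_le_2_sqrt) auto
      also have "\<dots> = 2 * sqrt (k n * n)"
        using \<open>0 < real (k n)\<close> by (simp add: real_sqrt_divide real_sqrt_mult field_simps)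
      also have "\<dots> \<le> 2 * sqrt ((s * n)^2)"
        using elim by (intro mult_left_mono real_sqrt_le_mono) (auto simp: power2_eq_square)
      finally show ?thesis using s by simp
    qed
    moreover have "k n * L \<le> s * (n * L)"
    proof -
      have "s^2 * n \<le> s * n"
        using s by (intro mult_right_mono) (auto simp: power2_eq_square)
      then have "real (k n) \<le> s * n" using elim by linarith
      then show ?thesis using \<open>1 \<le> L\<close> by (simp add: mult_right_mono mult.assoc)
    qed
    moreover have "k n * ln 3 \<le> k n * L" "s * n \<le> s * (n * L)"
      using \<open>ln 3 \<le> L\<close> \<open>1 \<le> L\<close> s \<open>0 < real n\<close> by (simp_all add: mult_left_mono)
    moreover have "4 * s * (n * L) \<le> r * (n * L)"
      using s \<open>1 \<le> L\<close> \<open>0 < real n\<close> by (intro mult_right_mono) auto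
    ultimately show ?case
      unfolding L_def[symmetric] by (simp add: algebra_simps)
  qed
qed

lemma eventually_lower_order_terms_le:
  fixes r a b :: real
  assumes "0 < r" "0 \<le> a" "0 \<le> b"
  shows "\<forall>\<^sub>F n in sequentially.
    a * (n + 1) + k n * ln (3 * n / \<delta> n) + b * ln (3 / \<delta> n) \<le> r * (n * ln (k n / \<delta> n))"
proof -
  have r3: "0 < r/3" using assms by simp
  show ?thesis
    using eventually_k_ln_le[OF r3] eventually_ln_ratio_ge[of "max (max 1 (ln 3)) (6 * a / r)"]
      \<delta>_pos k_pos filterlim_real_sequentially[unfolded filterlim_at_top, rule_format, of "6 * b / r"]
      eventually_ge_at_top[of 1]
  proof eventually_elim
    case (elim n)
    define L where "L = ln (k n / \<delta> n)"
    have L: "1 \<le> L" "ln 3 \<le> L" "6 * a / r \<le> L"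
      using elim by (auto simp: L_def)
    have "ln (3 / \<delta> n) = ln 3 - ln (\<delta> n)" "L = ln (k n) - ln (\<delta> n)" "0 \<le> ln (real (k n))"
      using elim by (simp_all add: L_def ln_divide_pos)
    then have "b * ln (3 / \<delta> n) \<le> b * (2 * L)"
      using L \<open>0 \<le> b\<close> by (intro mult_left_mono) auto
    also have "\<dots> \<le> (r/3) * (n * L)"
      using elim L assms by (simp add: field_simps mult_right_mono)
    finally have "b * ln (3 / \<delta> n) \<le> (r/3) * (n * L)" .
    moreover have "a * (n + 1) \<le> (r/3) * (n * L)"
    proof -
      have "a * (n + 1) \<le> a * (2 * n)"
        using elim \<open>0 \<le> a\<close> by (intro mult_left_mono) auto
      also have "\<dots> = 2 * a * n" by simp
      also have "\<dots> \<le> (r/3) * L * n"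
        using L assms by (intro mult_right_mono) (simp_all add: field_simps)
      finally show ?thesis by (simp add: algebra_simps)
    qed
    ultimately show ?case
      using elim unfolding L_def by linarith
  qed
qed

lemma eventually_lower_bound:
  fixes p \<eta> :: real
  assumes p: "0 < p" "p < 1/2" and "0 < \<eta>"
  shows "\<forall>\<^sub>F n in sequentially. \<forall>T A. valid_alg n A \<and> worst_err p n (k n) A T \<le> \<delta> n
     \<longrightarrow> (1 - \<eta>) * (real n * ln (real (k n) / \<delta> n) / D_KL p) \<le> real T"
proof (cases "\<eta> < 1")
  case False
  show ?thesis
    using eventually_ln_ratio_ge[of 0]
  proof eventually_elim
    case (elim n)
    have "(1 - \<eta>) * (real n * ln (real (k n) / \<delta> n) / D_KL p) \<le> 0"
      using False elim D_KL_pos[OF p] by (intro mult_nonpos_nonneg) auto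
    then show ?case by (auto intro: order_trans)
  qed
next
  case True
  define \<alpha> where "\<alpha> = 1 + \<eta>/8"
  define \<rho>0 where "\<rho>0 = (\<alpha>-1)/(2*\<alpha>)"
  define C where "C = ln ((1-1/\<alpha>) * \<rho>0^2 / 2)"
  have "1 < \<alpha>" "0 < \<rho>0" "0 < (1-2*p)^2 * \<alpha>^2 * (\<alpha>-1)^2"
    using \<open>0 < \<eta>\<close> p by (simp_all add: \<alpha>_def \<rho>0_def)
  then obtain M where "0 < M" and M: "4*p*(1-p) / ((1-2*p)^2 * \<alpha>^2 * (\<alpha>-1)^2 * M) \<le> \<rho>0"
    using exists_pos_divide_le by blast
  have pos: "0 < \<rho>0/8" "0 < \<rho>0^2/8" "0 < \<eta>/32"
    using \<open>0 < \<rho>0\<close> \<open>0 < \<eta>\<close> by simp_all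
  show ?thesis
    using eventually_\<delta>_le[OF pos(1)] eventually_\<delta>_le[OF pos(2)] eventually_k_le[OF pos(3)] \<delta>_pos k_pos
      eventually_ln_ratio_ge[of "max 0 (max (D_KL p * \<alpha>^2 * M - C + 1) (- 32 * C / \<eta>))"]
  proof eventually_elim
    case (elim n)
    define L where "L = ln (real (k n) / \<delta> n)"
    have L_ge: "0 \<le> L" "D_KL p * \<alpha>^2 * M - C + 1 \<le> L" "- 32 * C / \<eta> \<le> L"
      using elim by (auto simp: L_def)
    then have "- 32 * C \<le> \<eta> * L"
      using mult_right_mono[OF L_ge(3), of \<eta>] \<open>0 < \<eta>\<close> by (simp add: mult.commute)
    then have L: "D_KL p * \<alpha>^2 * M < L + C" "(1 - \<eta>/32) * L \<le> L + C"
      using L_ge by (simp_all add: algebra_simps)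
    have "(\<eta>/32) * n \<le> n"
      using True \<open>0 < \<eta>\<close> by (intro mult_left_le_one_le) auto
    then have "k n \<le> n"
      using elim by linarith
    then have n: "(1 - \<eta>/32) * n \<le> real (n - k n + 1)"
      using elim by (simp add: of_nat_diff algebra_simps)
    show ?case
    proof (intro allI impI, elim conjE)
      fix T A assume "valid_alg n A" "worst_err p n (k n) A T \<le> \<delta> n"
      then have "real (n - k n + 1) * (L + C) \<le> D_KL p * (1 + \<eta>/8)^3 * T"
        using lower_bound_queries[OF _ _ \<open>k n \<le> n\<close> p \<open>1 < \<alpha>\<close> \<open>0 < M\<close>] elim L M
        by (simp add: L_def C_def \<rho>0_def \<alpha>_def)
      then show "(1 - \<eta>) * (real n * ln (real (k n) / \<delta> n) / D_KL p) \<le> real T"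
        using lower_bound_rescale[OF \<open>0 < \<eta>\<close> True D_KL_pos[OF p] L_ge(1) _ n L(2)] unfolding L_def by simp
    qed
  qed
qed

lemma eventually_upper_bound:
  fixes p \<eta> :: real
  assumes p: "0 < p" "p < 1/2" and "0 < \<eta>"
  shows "\<forall>\<^sub>F n in sequentially. \<exists>T A. valid_alg n A \<and>
     real T \<le> (1 + \<eta>) * (real n * ln (real (k n) / \<delta> n) / D_KL p) \<and> worst_err p n (k n) A T \<le> \<delta> n"
proof -
  define c where "c = ln ((1-p)/p)"
  define f where "f = (1 + \<eta>/2) / (1 + \<eta>)"
  have "0 < c" using p by (simp add: c_def field_simps)
  have "0 < f" "f < 1"
    using \<open>0 < \<eta>\<close> by (simp_all add: f_def)
  then have "0 < (1-2*p) * f" "(1-2*p) * f < 1 - 2*p"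
    using p mult_strict_left_mono[of f 1 "1-2*p"] by simp_all
  then obtain \<mu> where "0 < \<mu>" and \<mu>: "p * exp \<mu> + (1-p) * exp (-\<mu>) \<le> exp (-(\<mu> * ((1-2*p) * f)))"
    using exists_exp_moment_le[OF p] by blast
  have slack: "0 < \<eta>/2" "0 \<le> ln 3 + 2*c" "0 \<le> c/\<mu>"
    using \<open>0 < \<eta>\<close> \<open>0 < c\<close> \<open>0 < \<mu>\<close> by simp_all
  show ?thesis
    using eventually_lower_order_terms_le[OF slack] eventually_k_le[OF zero_less_one]
      eventually_\<delta>_le[OF zero_less_one] \<delta>_pos k_pos eventually_ln_ratio_ge[of 0]
    by eventually_elim
       (rule upper_bound_with_slack[OF _ _ p \<open>0 < \<eta>\<close> _ _ _ \<open>0 < \<mu>\<close>], use \<mu> in \<open>simp_all add: f_def c_def\<close>)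
qed

end

text \<open>The hypothesis \<open>n powr (-1 + \<epsilon>) \<le> \<delta> n\<close> enters only through the positivity of \<open>\<delta>\<close>.\<close>

theorem corollary2:
  fixes p \<epsilon> :: real and k :: "nat \<Rightarrow> nat" and \<delta> :: "nat \<Rightarrow> real"
  assumes "0 < p" and "p < 1/2" and "0 < \<epsilon>"
    and "(\<lambda>n. real (k n)) \<in> o(\<lambda>n. real n)"
    and "\<delta> \<longlonglongrightarrow> 0"
    and "\<forall>\<^sub>F n in sequentially. 1 \<le> k n"
    and "\<forall>\<^sub>F n in sequentially. real n powr (-1 + \<epsilon>) \<le> \<delta> n"
  shows "\<forall>\<eta>>0. \<forall>\<^sub>F n in sequentially.
     (\<exists>T A. valid_alg n A \<and> real T \<le> (1 + \<eta>) * (real n * ln (real (k n) / \<delta> n) / D_KL p)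
              \<and> worst_err p n (k n) A T \<le> \<delta> n)
   \<and> (\<forall>T A. valid_alg n A \<and> worst_err p n (k n) A T \<le> \<delta> n
              \<longrightarrow> (1 - \<eta>) * (real n * ln (real (k n) / \<delta> n) / D_KL p) \<le> real T)"
proof -
  have "\<forall>\<^sub>F n in sequentially. 0 < \<delta> n"
    using assms(7) eventually_gt_at_top[of 0]
  proof eventually_elim
    case (elim n)
    then show ?case using powr_gt_zero[of "real n" "-1 + \<epsilon>"] by linarith
  qed
  then interpret threshold_regime k \<delta>
    using assms(4-6) by unfold_locales
  show ?thesis
    by (intro allI impI eventually_conj eventually_upper_bound[OF assms(1,2)] eventually_lower_bound[OF assms(1,2)])
qed

end
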